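(* Let $\mathbb{T}$ be a time scale, $a<b$ points of $\mathbb{T}$, $I_\mathbb{T}=[a,\infty)\cap\mathbb{T}$, and $\mathbb{X}$ a Banach space with norm $\|\cdot\|$. Let $f:I_\mathbb{T}\times\mathbb{X}\times\mathbb{X}\times\mathbb{X}\to\mathbb{X}$ be rd-continuous in its first variable and $h,g:I_\mathbb{T}\times I_\mathbb{T}\times\mathbb{X}\to\mathbb{X}$ be rd-continuous in their second variable, and consider $$x(t)=f\Big(t,x(t),\int_a^t h(t,s,x(s))\Delta s,\int_a^b g(t,s,x(s))\Delta s\Big),\quad t\in I_\mathbb{T}. \qquad (\ast)$$ Suppose there exist positive constants $\alpha,B,C$ and a constant $0\leq N<1$ such that for all $t,s\in I_\mathbb{T}$ and $u,v,w,\bar u,\bar v,\bar w\in\mathbb{X}$: $\|f(t,u,v,w)-f(t,\bar{u},\bar{v},\bar{w})\|\leq N\{\|u-\bar{u}\|+\|v-\bar{v}\|+\|w-\bar{w}\|\}$, $\|h(t,s,v)-h(t,s,\bar{v})\|\leq Be_\alpha(s,t)\|v-\bar{v}\|$, $\|g(t,s,u)-g(t,s,\bar{u})\|\leq Ce_\alpha(s,t)\|u-\bar{u}\|$, and $$q:=\int_a^bCN^*e_{BN^*}(s,a)\Delta s<1,\qquad N^*=\frac{N}{1-N}.$$ Moreover assume there is a nonnegative constant $d$ with $$\Big\|f\Big(t,0,\int_a^th(t,s,0)\Delta s,\int_a^bg(t,s,0)\Delta s\Big)\Big\|\leq \frac{d}{e_\alpha(t,a)},\quad t\in I_\mathbb{T}.$$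 If $x$ is any solution of $(\ast)$, then $$\|x(t)\|\leq \frac{d}{(1-N)(1-q)}\,e_{BN^*\ominus\alpha}(t,a),\quad t\in I_\mathbb{T}.$$
   Context: A time scale $\mathbb{T}$ is a nonempty closed subset of $\mathbb{R}$; $\sigma(t)=\inf\{s\in\mathbb{T}:s>t\}$, $\mu(t)=\sigma(t)-t$. rd-continuous means continuous at right-dense points with finite left limits at left-dense points; $\int\cdot\,\Delta s$ is the delta integral. For rd-continuous $p$ with $1+\mu p\neq0$, $e_p(t,s)=\exp\big(\int_s^t\xi_{\mu(\tau)}(p(\tau))\Delta\tau\big)$, where $\xi_h(z)=\log(1+hz)/h$ for $h\neq0$ and $\xi_0(z)=z$. For regressive $p,q$, $(p\ominus q)(t)=\frac{p(t)-q(t)}{1+\mu(t)q(t)}$. A solution of $(\ast)$ is an rd-continuous $x:I_\mathbb{T}\to\mathbb{X}$ satisfying $(\ast)$. *)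

theory Defs
  imports "HOL-Analysis.Analysis"
begin

definition time_scale :: "real set \<Rightarrow> bool" where
  "time_scale T \<longleftrightarrow> T \<noteq> {} \<and> closed T"

definition sigma :: "real set \<Rightarrow> real \<Rightarrow> real" where
  "sigma T t = (if \<exists>s\<in>T. s > t then Inf {s\<in>T. s > t} else t)"

definition rho :: "real set \<Rightarrow> real \<Rightarrow> real" where
  "rho T t = (if \<exists>s\<in>T. s < t then Sup {s\<in>T. s < t} else t)"

definition mu :: "real set \<Rightarrow> real \<Rightarrow> real" where
  "mu T t = sigma T t - t"

definition in_Tkappa :: "real set \<Rightarrow> real \<Rightarrow> bool" where
  "in_Tkappa T t \<longleftrightarrow> t \<in> T \<and> \<not> ((\<forall>s\<in>T. s \<le> t) \<and> rho T t < t)"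

definition rd_continuous_on :: "real set \<Rightarrow> real set \<Rightarrow> (real \<Rightarrow> 'a::topological_space) \<Rightarrow> bool" where
  "rd_continuous_on T S f \<longleftrightarrow>
     (\<forall>t\<in>S. (sigma T t = t \<longrightarrow> continuous (at t within S) f) \<and>
             (rho T t = t \<longrightarrow> (\<exists>L. (f \<longlongrightarrow> L) (at t within (S \<inter> {..<t})))))"

definition has_delta_derivative :: "real set \<Rightarrow> (real \<Rightarrow> 'a::real_normed_vector) \<Rightarrow> 'a \<Rightarrow> real \<Rightarrow> bool" where
  "has_delta_derivative T F D t \<longleftrightarrow>
     (\<forall>\<epsilon>>0. \<exists>\<delta>>0. \<forall>s\<in>T. \<bar>t - s\<bar> < \<delta> \<longrightarrow>
        norm (F (sigma T t) - F s - (sigma T t - s) *\<^sub>R D) \<le> \<epsilon> * \<bar>sigma T t - s\<bar>)"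

text \<open>Delta (Cauchy) integral: \<open>\<integral>_a^b f \<Delta>s = F b - F a\<close> where F is an
  antiderivative of f, i.e. F^Delta = f on T^kappa (restricted to the
  interval between a and b, where the integrand is given).\<close>

definition delta_integral :: "real set \<Rightarrow> (real \<Rightarrow> 'a::banach) \<Rightarrow> real \<Rightarrow> real \<Rightarrow> 'a" where
  "delta_integral T f a b =
     (THE v. \<exists>F. (\<forall>t. in_Tkappa T t \<and> min a b \<le> t \<and> t \<le> max a b \<longrightarrow>
                        has_delta_derivative T F (f t) t) \<and> v = F b - F a)"

text \<open>Cylinder transformation and the (real) exponential function on T,
  for positively regressive p (the only case used here).\<close>

definition xi :: "real \<Rightarrow> real \<Rightarrow> real" where
  "xi h z = (if h = 0 then z else ln (1 + h * z) / h)"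

definition ts_exp :: "real set \<Rightarrow> (real \<Rightarrow> real) \<Rightarrow> real \<Rightarrow> real \<Rightarrow> real" where
  "ts_exp T p t s = exp (delta_integral T (\<lambda>\<tau>. xi (mu T \<tau>) (p \<tau>)) s t)"

definition ts_ominus :: "real set \<Rightarrow> (real \<Rightarrow> real) \<Rightarrow> (real \<Rightarrow> real) \<Rightarrow> real \<Rightarrow> real" where
  "ts_ominus T p q t = (p t - q t) / (1 + mu T t * q t)"

end

theory Submission
  imports Defs
begin

text \<open>
  Delta integrals of rd-continuous functions are computed as Henstock--Kurzweil integrals of
  the step function \<open>r \<mapsto> f (max {s \<in> T. s \<le> r})\<close>: its indefinite integral is a delta
  antiderivative, and delta antiderivatives are unique by the induction principle for time scales.

  For a solution \<open>x\<close>, the Lipschitz bounds and the contraction constant \<open>N < 1\<close> show that the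
  weighted norm \<open>u(t) = e\<^sub>\<alpha>(t, a) \<parallel>x(t)\<parallel>\<close> satisfies the linear inequality
  \<open>u(t) \<le> c + B N\<^sup>* \<integral>\<^sub>a\<^sup>t u \<Delta>s\<close> with \<open>c = d / (1 - N) + N\<^sup>* C \<integral>\<^sub>a\<^sup>b u \<Delta>s\<close>.
  Gronwall's inequality on time scales gives \<open>u(t) \<le> c e\<^bsub>BN\<^sup>*\<^esub>(t, a)\<close>; integrating this bound over
  \<open>[a, b]\<close> gives \<open>c \<le> c q + d / (1 - N)\<close>, and \<open>e\<^bsub>BN\<^sup>*\<^esub> / e\<^sub>\<alpha> = e\<^bsub>BN\<^sup>* \<ominus> \<alpha>\<^esub>\<close> finishes the estimate.
\<close>

section \<open>Points of a time scale\<close>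

definition ts_floor :: "real set \<Rightarrow> real \<Rightarrow> real" where
  "ts_floor T r = Sup {s\<in>T. s \<le> r}"

definition left_dense :: "real set \<Rightarrow> real \<Rightarrow> bool" where
  "left_dense T t \<longleftrightarrow> (\<forall>\<delta>>0. \<exists>s\<in>T. t - \<delta> < s \<and> s < t)"

lemma sigma_ge_self: "sigma T t \<ge> t"
proof (cases "\<exists>s\<in>T. s > t")
  case True
  then show ?thesis unfolding sigma_def by (auto intro!: cInf_greatest)
qed (simp add: sigma_def)

lemma sigma_le_of_gt: "s \<in> T \<Longrightarrow> s > t \<Longrightarrow> sigma T t \<le> s"
  unfolding sigma_def by (auto intro!: cInf_lower simp: bdd_below_def intro: less_imp_le)

lemma sigma_no_point_between: "s \<in> T \<Longrightarrow> t < s \<Longrightarrow> s < sigma T t \<Longrightarrow> False"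
  using sigma_le_of_gt by fastforce

lemma ts_floor_props:
  assumes "closed T" "a \<in> T" "a \<le> r"
  shows "ts_floor T r \<in> T" "a \<le> ts_floor T r" "ts_floor T r \<le> r"
proof -
  have ne: "{s\<in>T. s \<le> r} \<noteq> {}" using assms by auto
  have bb: "bdd_above {s\<in>T. s \<le> r}" by (auto simp: bdd_above_def)
  have cl: "closed {s\<in>T. s \<le> r}"
    using closed_Int[OF assms(1) closed_atMost[of r]] by (simp add: Int_def atMost_def)
  show "ts_floor T r \<in> T" using closed_contains_Sup[OF ne bb cl] unfolding ts_floor_def by auto
  show "a \<le> ts_floor T r" unfolding ts_floor_def using assms by (auto intro!: cSup_upper bb)
  show "ts_floor T r \<le> r" unfolding ts_floor_def using ne by (auto intro!: cSup_least)
qed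

lemma ts_floor_upper: "s \<in> T \<Longrightarrow> s \<le> r \<Longrightarrow> s \<le> ts_floor T r"
  unfolding ts_floor_def by (auto intro!: cSup_upper simp: bdd_above_def)

lemma ts_floor_self: "closed T \<Longrightarrow> t \<in> T \<Longrightarrow> ts_floor T t = t"
  using ts_floor_props[of T t t] ts_floor_upper[of t T t] by auto

lemma ts_floor_eq:
  assumes "x1 \<le> x2" and "\<And>s. s \<in> T \<Longrightarrow> x1 < s \<Longrightarrow> s \<le> x2 \<Longrightarrow> False"
  shows "ts_floor T x2 = ts_floor T x1"
  unfolding ts_floor_def by (rule arg_cong[where f=Sup]) (use assms in force)

lemma left_dense_rho: "left_dense T t \<Longrightarrow> rho T t = t"
proof -
  assume ld: "left_dense T t"
  then obtain s0 where s0: "s0 \<in> T" "s0 < t" unfolding left_dense_def by (meson zero_less_one)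
  have ne: "{s\<in>T. s < t} \<noteq> {}" using s0 by auto
  have bb: "bdd_above {s\<in>T. s < t}" by (auto simp: bdd_above_def intro: less_imp_le)
  have le: "Sup {s\<in>T. s < t} \<le> t" using ne by (auto intro!: cSup_least intro: less_imp_le)
  have ge: "Sup {s\<in>T. s < t} \<ge> t"
  proof (rule field_le_epsilon)
    fix e :: real assume "e > 0"
    then obtain s where "s \<in> T" "t - e < s" "s < t" using ld unfolding left_dense_def by blast
    then have "s \<le> Sup {s\<in>T. s < t}" by (auto intro!: cSup_upper bb)
    then show "t \<le> Sup {s\<in>T. s < t} + e" using \<open>t - e < s\<close> by linarith
  qed
  show ?thesis unfolding rho_def using s0 le ge by auto
qed

lemma left_dense_in_Tkappa: "left_dense T t \<Longrightarrow> t \<in> T \<Longrightarrow> in_Tkappa T t"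
  using left_dense_rho unfolding in_Tkappa_def by auto

lemma in_Tkappa_below: "t \<in> T \<Longrightarrow> b \<in> T \<Longrightarrow> t < b \<Longrightarrow> in_Tkappa T t"
  unfolding in_Tkappa_def by force

lemma left_scattered_sigma_pred:
  assumes cl: "closed T" and aT: "a \<in> T" and s0T: "s0 \<in> T" and as0: "a < s0" and "\<not> left_dense T s0"
  obtains r where "r \<in> T" "a \<le> r" "r < s0" "sigma T r = s0"
proof -
  obtain \<delta> where d: "\<delta> > 0" "\<And>s. s \<in> T \<Longrightarrow> \<not> (s0 - \<delta> < s \<and> s < s0)"
    using assms(5) unfolding left_dense_def by blast
  define d' where "d' = min \<delta> (s0 - a)"
  have d'p: "d' > 0" "d' \<le> \<delta>" "d' \<le> s0 - a" using d as0 unfolding d'_def by auto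
  define r where "r = ts_floor T (s0 - d')"
  have rT: "r \<in> T" "a \<le> r" "r \<le> s0 - d'" using ts_floor_props[OF cl aT, of "s0 - d'"] d'p
    unfolding r_def by auto
  have sig: "sigma T r = s0"
  proof (rule antisym)
    show "sigma T r \<le> s0" using sigma_le_of_gt[OF s0T(1)] rT d'p by auto
    have ex: "\<exists>s\<in>T. s > r" using s0T rT d'p by (intro bexI[of _ s0]) auto
    have "s0 \<le> Inf {s\<in>T. s > r}"
    proof (rule cInf_greatest)
      show "{s\<in>T. s > r} \<noteq> {}" using ex by auto
      fix s assume s: "s \<in> {s\<in>T. s > r}"
      show "s0 \<le> s"
      proof (rule ccontr)
        assume "\<not> s0 \<le> s"
        then have "s \<le> s0 - d'" using d(2)[of s] s d'p by force
        then have "s \<le> r" unfolding r_def using ts_floor_upper s by auto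
        then show False using s by auto
      qed
    qed
    then show "s0 \<le> sigma T r" unfolding sigma_def using ex by auto
  qed
  show ?thesis using that rT d'p sig by auto
qed

lemma time_scale_induct:
  assumes cl: "closed T" and aT: "a \<in> T"
    and P0: "P a"
    and Prs: "\<And>t. t \<in> T \<Longrightarrow> a \<le> t \<Longrightarrow> t < b \<Longrightarrow> sigma T t > t \<Longrightarrow> P t \<Longrightarrow> P (sigma T t)"
    and Prd: "\<And>t. t \<in> T \<Longrightarrow> a \<le> t \<Longrightarrow> t < b \<Longrightarrow> sigma T t = t \<Longrightarrow> P t \<Longrightarrow>
               \<exists>\<delta>>0. \<forall>s\<in>T. t < s \<and> s < t + \<delta> \<longrightarrow> P s"
    and Pld: "\<And>t. t \<in> T \<Longrightarrow> a < t \<Longrightarrow> t \<le> b \<Longrightarrow> left_dense T t \<Longrightarrow>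
               (\<And>s. s \<in> T \<Longrightarrow> a \<le> s \<Longrightarrow> s < t \<Longrightarrow> P s) \<Longrightarrow> P t"
    and tT: "t \<in> T" "a \<le> t" "t \<le> b"
  shows "P t"
proof (rule ccontr)
  assume nP: "\<not> P t"
  define S where "S = {t\<in>T. a \<le> t \<and> t \<le> b \<and> \<not> P t}"
  have ne: "S \<noteq> {}" using nP tT unfolding S_def by auto
  have bb: "bdd_below S" unfolding S_def by (auto simp: bdd_below_def)
  define s0 where "s0 = Inf S"
  have s0cl: "s0 \<in> closure S" unfolding s0_def by (rule closure_contains_Inf[OF ne bb])
  have "closure S \<subseteq> closure (T \<inter> {a..b})" by (rule closure_mono) (auto simp: S_def)
  also have "\<dots> = T \<inter> {a..b}" using cl by (simp add: closed_Int closure_closed)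
  finally have s0T: "s0 \<in> T" "a \<le> s0" "s0 \<le> b" using s0cl by auto
  have lower: "\<And>e. e \<in> S \<Longrightarrow> s0 \<le> e" unfolding s0_def by (rule cInf_lower[OF _ bb])
  have below: "P r" if "r \<in> T" "a \<le> r" "r < s0" for r
  proof (rule ccontr)
    assume "\<not> P r" then have "r \<in> S" using that s0T unfolding S_def by auto
    then show False using lower that by force
  qed
  have Ps0: "P s0"
  proof (cases "s0 = a")
    case True then show ?thesis using P0 by simp
  next
    case False
    then have as0: "a < s0" using s0T by auto
    show ?thesis
    proof (cases "left_dense T s0")
      case True then show ?thesis using Pld[OF s0T(1) as0 s0T(3)] below by blast
    next
      case False
      then obtain r where r: "r \<in> T" "a \<le> r" "r < s0" "sigma T r = s0"
        using left_scattered_sigma_pred[OF cl aT s0T(1) as0] by blast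
      then have "P (sigma T r)" using Prs[OF r(1,2)] below[OF r(1-3)] s0T by auto
      then show ?thesis using r by simp
    qed
  qed
  obtain e where e: "e \<in> S" using ne by auto
  have eS: "e \<in> T" "a \<le> e" "e \<le> b" "\<not> P e" using e unfolding S_def by auto
  have s0e: "s0 < e" using lower[OF e] Ps0 eS by (cases "s0 = e") auto
  show False
  proof (cases "sigma T s0 > s0")
    case True
    have "sigma T s0 \<le> Inf S"
    proof (rule cInf_greatest[OF ne])
      fix e' assume e': "e' \<in> S"
      then have "s0 \<le> e'" using lower by auto
      moreover have "e' \<noteq> s0" using e' Ps0 unfolding S_def by auto
      ultimately show "sigma T s0 \<le> e'" using sigma_le_of_gt[of e' T s0] e' unfolding S_def by auto
    qed
    then show False using True unfolding s0_def by simp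
  next
    case False
    then have ss: "sigma T s0 = s0" using sigma_ge_self[where t=s0 and T=T] by auto
    obtain \<delta> where d: "\<delta> > 0" "\<And>s. s \<in> T \<Longrightarrow> s0 < s \<Longrightarrow> s < s0 + \<delta> \<Longrightarrow> P s"
      using Prd[OF s0T(1) s0T(2) _ ss Ps0] s0e eS by auto
    have "s0 + \<delta> \<le> Inf S"
    proof (rule cInf_greatest[OF ne])
      fix e' assume e': "e' \<in> S"
      then have "s0 \<le> e'" using lower by auto
      moreover have "e' \<noteq> s0" using e' Ps0 unfolding S_def by auto
      ultimately show "s0 + \<delta> \<le> e'" using d(2)[of e'] e' unfolding S_def by force
    qed
    then show False using d unfolding s0_def by simp
  qed
qed

section \<open>Uniqueness of delta antiderivatives\<close>

lemma has_delta_derivative_zero_iff: "has_delta_derivative T F 0 t \<longleftrightarrow>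
  (\<forall>\<epsilon>>0. \<exists>\<delta>>0. \<forall>s\<in>T. \<bar>t - s\<bar> < \<delta> \<longrightarrow> norm (F (sigma T t) - F s) \<le> \<epsilon> * \<bar>sigma T t - s\<bar>)"
  unfolding has_delta_derivative_def by simp

lemma has_delta_derivative_zero_right_scattered:
  fixes F :: "real \<Rightarrow> 'a::real_normed_vector"
  assumes Dt: "has_delta_derivative T F 0 t" and t: "t \<in> T" "t < sigma T t"
  shows "F (sigma T t) = F t"
proof -
  have "norm (F (sigma T t) - F t) \<le> 0 + e" if "e > 0" for e
  proof -
    have "e / (sigma T t - t) > 0" using that t by auto
    then obtain \<delta> where "\<delta> > 0" "\<forall>s\<in>T. \<bar>t - s\<bar> < \<delta> \<longrightarrow> norm (F (sigma T t) - F s) \<le> e / (sigma T t - t) * \<bar>sigma T t - s\<bar>"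
      using Dt unfolding has_delta_derivative_zero_iff by blast
    then have "norm (F (sigma T t) - F t) \<le> e / (sigma T t - t) * \<bar>sigma T t - t\<bar>" using t by auto
    also have "\<dots> = e" using t by simp
    finally show ?thesis by simp
  qed
  then show ?thesis using field_le_epsilon[of "norm (F (sigma T t) - F t)" 0] by simp
qed

lemma delta_derivative_zero_imp_eq:
  fixes F :: "real \<Rightarrow> 'a::real_normed_vector"
  assumes cl: "closed T" and aT: "a \<in> T" and bT: "b \<in> T" and ab: "a \<le> b"
    and D: "\<And>t. t \<in> T \<Longrightarrow> a \<le> t \<Longrightarrow> t \<le> b \<Longrightarrow> in_Tkappa T t \<Longrightarrow> has_delta_derivative T F 0 t"
  shows "F b = F a"
proof -
  have key: "norm (F b - F a) \<le> \<epsilon> * (b - a)" if ep: "\<epsilon> > 0" for \<epsilon>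
  proof (rule time_scale_induct[OF cl aT, where P="\<lambda>t. norm (F t - F a) \<le> \<epsilon> * (t - a)"])
    show "norm (F a - F a) \<le> \<epsilon> * (a - a)" by simp
  next
    fix t assume t: "t \<in> T" "a \<le> t" "t < b" "sigma T t > t" and Pt: "norm (F t - F a) \<le> \<epsilon> * (t - a)"
    have Dt: "has_delta_derivative T F 0 t" using D[OF t(1) t(2)] t in_Tkappa_below[OF t(1) bT] by auto
    then have "F (sigma T t) = F t" by (rule has_delta_derivative_zero_right_scattered) (use t in auto)
    then show "norm (F (sigma T t) - F a) \<le> \<epsilon> * (sigma T t - a)"
    proof -
      have "\<epsilon> * (t - a) \<le> \<epsilon> * (sigma T t - a)" using t ep by auto
      with Pt \<open>F (sigma T t) = F t\<close> show ?thesis by simp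
    qed
  next
    fix t assume t: "t \<in> T" "a \<le> t" "t < b" "sigma T t = t" and Pt: "norm (F t - F a) \<le> \<epsilon> * (t - a)"
    have Dt: "has_delta_derivative T F 0 t" using D[OF t(1) t(2)] t in_Tkappa_below[OF t(1) bT] by auto
    obtain \<delta> where d: "\<delta> > 0" "\<forall>s\<in>T. \<bar>t - s\<bar> < \<delta> \<longrightarrow> norm (F t - F s) \<le> \<epsilon> * \<bar>t - s\<bar>"
      using Dt ep t(4) unfolding has_delta_derivative_zero_iff by metis
    show "\<exists>\<delta>>0. \<forall>s\<in>T. t < s \<and> s < t + \<delta> \<longrightarrow> norm (F s - F a) \<le> \<epsilon> * (s - a)"
    proof (intro exI[of _ \<delta>] conjI ballI impI)
      fix s assume s: "s \<in> T" "t < s \<and> s < t + \<delta>"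
      then have "norm (F t - F s) \<le> \<epsilon> * (s - t)" using d by auto
      then have "norm (F s - F t) \<le> \<epsilon> * (s - t)" by (simp add: norm_minus_commute)
      from norm_diff_triangle_le[OF this Pt]
      show "norm (F s - F a) \<le> \<epsilon> * (s - a)" by (simp add: algebra_simps)
    qed (use d in auto)
  next
    fix t assume t: "t \<in> T" "a < t" "t \<le> b" "left_dense T t"
      and IH: "\<And>s. s \<in> T \<Longrightarrow> a \<le> s \<Longrightarrow> s < t \<Longrightarrow> norm (F s - F a) \<le> \<epsilon> * (s - a)"
    have Dt: "has_delta_derivative T F 0 t" using D[OF t(1)] t left_dense_in_Tkappa by auto
    show "norm (F t - F a) \<le> \<epsilon> * (t - a)"
    proof (rule field_le_epsilon)
      fix \<eta> :: real assume eta: "\<eta> > 0"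
      define m where "m = sigma T t - t + 1"
      have m: "m \<ge> 1" using sigma_ge_self[where T=T and t=t] unfolding m_def by simp
      have "\<eta> / (2 * m) > 0" using eta m by auto
      then obtain \<delta> where d: "\<delta> > 0" "\<forall>s\<in>T. \<bar>t - s\<bar> < \<delta> \<longrightarrow> norm (F (sigma T t) - F s) \<le> \<eta> / (2 * m) * \<bar>sigma T t - s\<bar>"
        using Dt unfolding has_delta_derivative_zero_iff by blast
      obtain s where s: "s \<in> T" "t - min 1 (min \<delta> (t - a)) < s" "s < t"
        using t(4) d(1) t(2) unfolding left_dense_def by (metis min_less_iff_conj zero_less_one diff_gt_0_iff_gt)
      have s1: "norm (F (sigma T t) - F s) \<le> \<eta> / (2 * m) * \<bar>sigma T t - s\<bar>" using d s by auto
      have s2: "norm (F (sigma T t) - F t) \<le> \<eta> / (2 * m) * \<bar>sigma T t - t\<bar>" using d t by auto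
      have "\<bar>sigma T t - s\<bar> \<le> m" "\<bar>sigma T t - t\<bar> \<le> m"
        using s sigma_ge_self[where T=T and t=t] unfolding m_def by auto
      then have "\<eta> / (2 * m) * \<bar>sigma T t - s\<bar> \<le> \<eta> / 2" "\<eta> / (2 * m) * \<bar>sigma T t - t\<bar> \<le> \<eta> / 2"
        using m eta by (auto simp: field_simps)
      with s1 s2 have "norm (F t - F (sigma T t)) \<le> \<eta>/2" "norm (F (sigma T t) - F s) \<le> \<eta>/2"
        by (auto simp: norm_minus_commute)
      from norm_diff_triangle_le[OF this] have "norm (F t - F s) \<le> \<eta>" by simp
      moreover have "norm (F s - F a) \<le> \<epsilon> * (s - a)" using IH s by auto
      ultimately have "norm (F t - F a) \<le> \<eta> + \<epsilon> * (s - a)" by (rule norm_diff_triangle_le)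
      moreover have "\<epsilon> * (s - a) \<le> \<epsilon> * (t - a)" using s ep by auto
      ultimately show "norm (F t - F a) \<le> \<epsilon> * (t - a) + \<eta>" by linarith
    qed
  qed (use bT ab in auto)
  show ?thesis
  proof -
    have "norm (F b - F a) \<le> 0 + e" if "e > 0" for e
    proof -
      have "norm (F b - F a) \<le> e / (b - a + 1) * (b - a)" using key[of "e / (b - a + 1)"] that ab by auto
      also have "\<dots> \<le> e" using that ab by (auto simp: field_simps)
      finally show ?thesis by simp
    qed
    then show ?thesis using field_le_epsilon[of "norm (F b - F a)" 0] by simp
  qed
qed

section \<open>Delta integrals as Henstock--Kurzweil integrals\<close>

lemma integrable_approx_extend:
  fixes g :: "real \<Rightarrow> 'a::banach"
  assumes "lo \<le> y" "y \<le> z" and h: "h integrable_on {lo..y}" "\<forall>x\<in>{lo..y}. norm (g x - h x) \<le> \<epsilon>"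
    and L: "\<And>x. y < x \<Longrightarrow> x < z \<Longrightarrow> norm (g x - L) \<le> \<epsilon>" and ep: "\<epsilon> \<ge> 0"
  shows "\<exists>h'. h' integrable_on {lo..z} \<and> (\<forall>x\<in>{lo..z}. norm (g x - h' x) \<le> \<epsilon>)"
proof -
  define h' where "h' x = (if x \<le> y then h x else if x < z then L else g z)" for x
  have i1: "h' integrable_on {lo..y}"
    by (rule integrable_eq[OF h(1)]) (auto simp: h'_def)
  have i2: "h' integrable_on {y..z}"
    by (rule integrable_spike_finite[where S="{y,z}" and f="\<lambda>x. L"]) (auto simp: h'_def)
  have "h' integrable_on {lo..z}" by (rule Henstock_Kurzweil_Integration.integrable_combine[OF assms(1,2) i1 i2])
  moreover have "\<forall>x\<in>{lo..z}. norm (g x - h' x) \<le> \<epsilon>"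
    using h(2) L ep by (auto simp: h'_def)
  ultimately show ?thesis by blast
qed

lemma regulated_integrable:
  fixes g :: "real \<Rightarrow> 'a::banach"
  assumes lohi: "lo \<le> hi"
    and R: "\<And>r \<epsilon>. r \<in> {lo..hi} \<Longrightarrow> \<epsilon> > 0 \<Longrightarrow> \<exists>\<delta>>0. \<exists>L. \<forall>x. r < x \<and> x < r + \<delta> \<longrightarrow> norm (g x - L) \<le> \<epsilon>"
    and L: "\<And>r \<epsilon>. r \<in> {lo..hi} \<Longrightarrow> \<epsilon> > 0 \<Longrightarrow> \<exists>\<delta>>0. \<exists>L. \<forall>x. r - \<delta> < x \<and> x < r \<longrightarrow> norm (g x - L) \<le> \<epsilon>"
  shows "g integrable_on {lo..hi}"
proof -
  have "g integrable_on cbox lo hi"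
  proof (rule integrable_uniform_limit)
    fix \<epsilon> :: real assume ep: "\<epsilon> > 0"
    define Q where "Q y \<longleftrightarrow> (\<exists>h. h integrable_on {lo..y} \<and> (\<forall>x\<in>{lo..y}. norm (g x - h x) \<le> \<epsilon>))" for y
    define S where "S = {y\<in>{lo..hi}. Q y}"
    have Qlo: "Q lo"
    proof -
      have "g integrable_on {lo..lo}" using integrable_on_refl[of g lo] by (simp only: cbox_interval)
      then show ?thesis unfolding Q_def using ep by (intro exI[of _ g]) auto
    qed
    have loS: "lo \<in> S" using Qlo lohi unfolding S_def by auto
    have bb: "bdd_above S" unfolding S_def by (auto simp: bdd_above_def)
    have ne: "S \<noteq> {}" using loS by auto
    define s where "s = Sup S"
    have sS: "lo \<le> s" "s \<le> hi" unfolding s_def using loS bb ne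
      by (auto intro!: cSup_upper cSup_least simp: S_def)
    have Qs: "Q s"
    proof (cases "s = lo")
      case True then show ?thesis using Qlo by simp
    next
      case False
      then have ls: "lo < s" using sS by auto
      obtain \<delta> L0 where d: "\<delta> > 0" "\<And>x. s - \<delta> < x \<and> x < s \<Longrightarrow> norm (g x - L0) \<le> \<epsilon>"
        using L[of s \<epsilon>] sS ep by auto
      have "s - min \<delta> (s - lo) < Sup S" using d ls unfolding s_def by auto
      then obtain y where y: "y \<in> S" "s - min \<delta> (s - lo) < y" using less_cSup_iff[OF ne bb] by auto
      have ys: "y \<le> s" unfolding s_def by (rule cSup_upper[OF y(1) bb])
      from y have "Q y" "lo \<le> y" unfolding S_def by auto
      then show ?thesis unfolding Q_def
        using integrable_approx_extend[of lo y s _ g \<epsilon> L0] ys d y ep by auto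
    qed
    have shi: "s = hi"
    proof (rule ccontr)
      assume "s \<noteq> hi" then have sh: "s < hi" using sS by auto
      obtain \<delta> L1 where d: "\<delta> > 0" "\<And>x. s < x \<and> x < s + \<delta> \<Longrightarrow> norm (g x - L1) \<le> \<epsilon>"
        using R[of s \<epsilon>] sS ep by auto
      define z where "z = min hi (s + \<delta>/2)"
      have z: "s < z" "z \<le> hi" using sh d unfolding z_def by auto
      have "Q z" using Qs unfolding Q_def
        using integrable_approx_extend[of lo s z _ g \<epsilon> L1] z d sS ep unfolding z_def by auto
      then have "z \<in> S" using z sS unfolding S_def by auto
      then have "z \<le> s" unfolding s_def by (rule cSup_upper[OF _ bb])
      then show False using z by simp
    qed
    show "\<exists>h. (\<forall>x\<in>cbox lo hi. norm (g x - h x) \<le> \<epsilon>) \<and> h integrable_on cbox lo hi"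
      using Qs shi unfolding Q_def by (auto simp: cbox_interval)
  qed
  then show ?thesis by (simp add: cbox_interval)
qed

text \<open>rd-continuity on \<open>T \<inter> [a, \<infinity>)\<close> in \<open>\<epsilon>\<close>-\<open>\<delta>\<close> form; the clause at left-dense points is the Cauchy
  form of the existence of a left limit.\<close>

definition rd_cont_from :: "real set \<Rightarrow> real \<Rightarrow> (real \<Rightarrow> 'a::real_normed_vector) \<Rightarrow> bool" where
  "rd_cont_from T a f \<longleftrightarrow>
    (\<forall>t\<in>T. a \<le> t \<longrightarrow> sigma T t = t \<longrightarrow>
       (\<forall>\<epsilon>>0. \<exists>\<delta>>0. \<forall>y\<in>T. a \<le> y \<longrightarrow> \<bar>y - t\<bar> < \<delta> \<longrightarrow> norm (f y - f t) \<le> \<epsilon>)) \<and>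
    (\<forall>t\<in>T. a < t \<longrightarrow> left_dense T t \<longrightarrow>
       (\<forall>\<epsilon>>0. \<exists>\<delta>>0. \<exists>L. \<forall>y\<in>T. a \<le> y \<longrightarrow> t - \<delta> < y \<longrightarrow> y < t \<longrightarrow> norm (f y - L) \<le> \<epsilon>))"

text \<open>The piecewise constant extension of \<open>f\<close> from \<open>T \<inter> [a, \<infinity>)\<close>; its Henstock--Kurzweil integrals are
  the delta integrals of \<open>f\<close>.\<close>

definition step_ext :: "real set \<Rightarrow> real \<Rightarrow> (real \<Rightarrow> 'a) \<Rightarrow> real \<Rightarrow> 'a" where
  "step_ext T a f r = (if r < a then f a else f (ts_floor T r))"

lemma rd_cont_from_right_dense: "rd_cont_from T a f \<Longrightarrow> t \<in> T \<Longrightarrow> a \<le> t \<Longrightarrow> sigma T t = t \<Longrightarrow> \<epsilon> > 0 \<Longrightarrow>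
   \<exists>\<delta>>0. \<forall>y\<in>T. a \<le> y \<longrightarrow> \<bar>y - t\<bar> < \<delta> \<longrightarrow> norm (f y - f t) \<le> \<epsilon>"
  unfolding rd_cont_from_def by blast

lemma rd_cont_from_left_dense: "rd_cont_from T a f \<Longrightarrow> t \<in> T \<Longrightarrow> a < t \<Longrightarrow> left_dense T t \<Longrightarrow> \<epsilon> > 0 \<Longrightarrow>
   \<exists>\<delta>>0. \<exists>L. \<forall>y\<in>T. a \<le> y \<longrightarrow> t - \<delta> < y \<longrightarrow> y < t \<longrightarrow> norm (f y - L) \<le> \<epsilon>"
  unfolding rd_cont_from_def by blast

lemma not_in_closed_ball_gap:
  fixes T :: "real set" and r :: real
  assumes "closed T" "r \<notin> T"
  obtains \<delta> where "\<delta> > 0" "\<And>s. s \<in> T \<Longrightarrow> \<bar>s - r\<bar> < \<delta> \<Longrightarrow> False"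
proof -
  have "open (- T)" using assms by auto
  then obtain \<delta> where "\<delta> > 0" "ball r \<delta> \<subseteq> - T" using assms open_contains_ball by blast
  then show ?thesis using that by (auto simp: dist_real_def abs_minus_commute subset_iff)
qed

lemma step_ext_right_approx:
  assumes cl: "closed T" and aT: "a \<in> T" and rd: "rd_cont_from T a f" and ep: "\<epsilon> > 0"
  shows "\<exists>\<delta>>0. \<exists>L. \<forall>x. r < x \<and> x < r + \<delta> \<longrightarrow> norm (step_ext T a f x - L) \<le> \<epsilon>"
proof (cases "r < a")
  case True
  then show ?thesis using ep by (intro exI[of _ "a - r"] conjI exI[of _ "f a"]) (auto simp: step_ext_def)
next
  case False
  then have ar: "a \<le> r" by simp
  show ?thesis
  proof (cases "r \<in> T")
    case rT: True
      show ?thesis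
      proof (cases "sigma T r > r")
        case True
        have "norm (step_ext T a f x - f r) \<le> \<epsilon>" if "r < x" "x < r + (sigma T r - r)" for x
        proof -
          have "ts_floor T x = ts_floor T r"
            by (rule ts_floor_eq) (use that sigma_no_point_between in fastforce)+
          then show ?thesis using that ar ts_floor_self[OF cl rT] ep by (simp add: step_ext_def)
        qed
        then show ?thesis using True by (intro exI[of _ "sigma T r - r"] conjI exI[of _ "f r"]) auto
      next
        case False
        then have sr: "sigma T r = r" using sigma_ge_self[where T=T and t=r] by auto
        obtain \<delta> where d: "\<delta> > 0" "\<forall>y\<in>T. a \<le> y \<longrightarrow> \<bar>y - r\<bar> < \<delta> \<longrightarrow> norm (f y - f r) \<le> \<epsilon>"
          using rd_cont_from_right_dense[OF rd rT ar sr ep] by blast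
        have "norm (step_ext T a f x - f r) \<le> \<epsilon>" if "r < x" "x < r + \<delta>" for x
        proof -
          have "ts_floor T x \<in> T" "a \<le> ts_floor T x" "ts_floor T x \<le> x" using ts_floor_props[OF cl aT, of x] that ar by auto
          moreover have "r \<le> ts_floor T x" using ts_floor_upper[OF rT] that by auto
          ultimately show ?thesis using d that ar by (auto simp: step_ext_def)
        qed
        then show ?thesis using d by (intro exI[of _ \<delta>] conjI exI[of _ "f r"]) auto
      qed
  next
    case rT: False
    obtain \<delta> where d: "\<delta> > 0" "\<And>s. s \<in> T \<Longrightarrow> \<bar>s - r\<bar> < \<delta> \<Longrightarrow> False" using not_in_closed_ball_gap[OF cl rT] by blast
    have "norm (step_ext T a f x - f (ts_floor T r)) \<le> \<epsilon>" if "r < x" "x < r + \<delta>" for x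
    proof -
      have "ts_floor T x = ts_floor T r"
        by (rule ts_floor_eq) (use that d in fastforce)+
      then show ?thesis using that ar ep by (simp add: step_ext_def)
    qed
    then show ?thesis using d by (intro exI[of _ \<delta>] conjI exI[of _ "f (ts_floor T r)"]) auto
  qed
qed

lemma step_ext_left_approx:
  assumes cl: "closed T" and aT: "a \<in> T" and rd: "rd_cont_from T a f" and ep: "\<epsilon> > 0"
  shows "\<exists>\<delta>>0. \<exists>L. \<forall>x. r - \<delta> < x \<and> x < r \<longrightarrow> norm (step_ext T a f x - L) \<le> \<epsilon>"
proof (cases "r \<le> a")
  case True
  then show ?thesis using ep by (intro exI[of _ 1] conjI exI[of _ "f a"]) (auto simp: step_ext_def)
next
  case False
  then have ar: "a < r" by simp
  show ?thesis
  proof (cases "r \<in> T")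
    case rT: True
    show ?thesis
    proof (cases "left_dense T r")
      case True
      obtain \<delta> L where d: "\<delta> > 0" "\<forall>y\<in>T. a \<le> y \<longrightarrow> r - \<delta> < y \<longrightarrow> y < r \<longrightarrow> norm (f y - L) \<le> \<epsilon>"
        using rd_cont_from_left_dense[OF rd rT ar True ep] by blast
      obtain y0 where y0: "y0 \<in> T" "r - min \<delta> (r - a) < y0" "y0 < r"
        using True d(1) ar unfolding left_dense_def by (metis diff_gt_0_iff_gt min_less_iff_conj)
      have "norm (step_ext T a f x - L) \<le> \<epsilon>" if "r - (r - y0) < x" "x < r" for x
      proof -
        have ax: "a \<le> x" using that y0 by auto
        have "ts_floor T x \<in> T" "a \<le> ts_floor T x" "ts_floor T x \<le> x" using ts_floor_props[OF cl aT ax] by auto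
        moreover have "y0 \<le> ts_floor T x" using ts_floor_upper[OF y0(1)] that by auto
        ultimately show ?thesis using d that y0 ax by (auto simp: step_ext_def)
      qed
      then show ?thesis using y0 by (intro exI[of _ "r - y0"] conjI exI[of _ L]) auto
    next
      case False
      then obtain \<delta>0 where d0: "\<delta>0 > 0" "\<And>s. s \<in> T \<Longrightarrow> \<not> (r - \<delta>0 < s \<and> s < r)"
        unfolding left_dense_def by blast
      define \<delta> where "\<delta> = min \<delta>0 (r - a)"
      have dp: "\<delta> > 0" "\<delta> \<le> \<delta>0" "\<delta> \<le> r - a" using d0 ar unfolding \<delta>_def by auto
      have "norm (step_ext T a f x - f (ts_floor T (r - \<delta>))) \<le> \<epsilon>" if "r - \<delta> < x" "x < r" for x
      proof -
        have "ts_floor T x = ts_floor T (r - \<delta>)"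
          by (rule ts_floor_eq) (use that d0 dp in fastforce)+
        then show ?thesis using that dp ep by (simp add: step_ext_def)
      qed
      then show ?thesis using dp by (intro exI[of _ \<delta>] conjI exI[of _ "f (ts_floor T (r - \<delta>))"]) auto
    qed
  next
    case rT: False
    obtain \<delta> where d: "\<delta> > 0" "\<And>s. s \<in> T \<Longrightarrow> \<bar>s - r\<bar> < \<delta> \<Longrightarrow> False" using not_in_closed_ball_gap[OF cl rT] by blast
    have "norm (step_ext T a f x - f (ts_floor T r)) \<le> \<epsilon>" if "r - min \<delta> (r - a) < x" "x < r" for x
    proof -
      have "ts_floor T r = ts_floor T x"
        by (rule ts_floor_eq) (use that d rT in fastforce)+
      moreover have "a < x" using that by auto
      ultimately show ?thesis using that ep by (simp add: step_ext_def)
    qed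
    then show ?thesis using d ar by (intro exI[of _ "min \<delta> (r - a)"] conjI exI[of _ "f (ts_floor T r)"]) auto
  qed
qed

lemma step_ext_integrable:
  fixes f :: "real \<Rightarrow> 'a::banach"
  assumes cl: "closed T" and aT: "a \<in> T" and rd: "rd_cont_from T a f"
  shows "step_ext T a f integrable_on {lo..hi}"
proof (cases "lo \<le> hi")
  case True
  show ?thesis
    by (rule regulated_integrable[OF True]) (use step_ext_right_approx[OF cl aT rd] step_ext_left_approx[OF cl aT rd] in auto)
next
  case False
  then show ?thesis by (simp add: integrable_on_empty)
qed

lemma integral_near_const:
  fixes e :: "real \<Rightarrow> 'a::banach"
  assumes uv: "u \<le> v" and ie: "e integrable_on {u..v}" and b: "\<And>x. x \<in> {u..v} \<Longrightarrow> norm (e x - c) \<le> B"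
  shows "norm (integral {u..v} e - (v - u) *\<^sub>R c) \<le> B * (v - u)"
proof -
  have "integral {u..v} (\<lambda>x. e x - c) = integral {u..v} e - (v - u) *\<^sub>R c"
    using Henstock_Kurzweil_Integration.integral_diff[OF ie integrable_const_ivl[of c u v]] uv
    by (simp add: content_real)
  moreover have "norm (integral {u..v} (\<lambda>x. e x - c)) \<le> integral {u..v} (\<lambda>x. B)"
    by (rule integral_norm_bound_integral)
       (auto intro!: Henstock_Kurzweil_Integration.integrable_diff ie b)
  moreover have "integral {u..v} (\<lambda>x. B) = B * (v - u)" using uv by (simp add: content_real)
  ultimately show ?thesis by (metis (no_types, lifting))
qed

lemma step_ext_integral_split:
  fixes f :: "real \<Rightarrow> 'a::banach"
  assumes cl: "closed T" and aT: "a \<in> T" and rd: "rd_cont_from T a f" and "lo \<le> s" "s \<le> y"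
  shows "integral {lo..y} (step_ext T a f) = integral {lo..s} (step_ext T a f) + integral {s..y} (step_ext T a f)"
  using Henstock_Kurzweil_Integration.integral_combine[OF assms(4,5) step_ext_integrable[OF cl aT rd]] by simp

lemma integral_step_ext_right_scattered:
  fixes f :: "real \<Rightarrow> 'a::banach"
  assumes cl: "closed T" and tT: "t \<in> T" and at: "a \<le> t" and rs: "t < sigma T t"
  shows "integral {t..sigma T t} (step_ext T a f) = (sigma T t - t) *\<^sub>R f t"
proof -
  have "integral {t..sigma T t} (step_ext T a f) = integral {t..sigma T t} (\<lambda>x. f t)"
  proof (rule integral_spike[of "{sigma T t}"])
    fix x assume x: "x \<in> {t..sigma T t} - {sigma T t}"
    have "ts_floor T x = ts_floor T t"
      by (rule ts_floor_eq) (use x sigma_no_point_between in fastforce)+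
    then show "f t = step_ext T a f x" using x at ts_floor_self[OF cl tT] unfolding step_ext_def by auto
  qed auto
  also have "\<dots> = (sigma T t - t) *\<^sub>R f t" using rs by (simp add: content_real)
  finally show ?thesis .
qed

lemma step_ext_integral_delta_estimate_right_scattered:
  fixes f :: "real \<Rightarrow> 'a::banach"
  assumes cl: "closed T" and aT: "a \<in> T" and rd: "rd_cont_from T a f" and tT: "t \<in> T" and at: "a \<le> t"
    and rs: "t < sigma T t" and ep: "\<epsilon> > 0"
  shows "\<exists>\<delta>>0. \<forall>s\<in>T. \<bar>t - s\<bar> < \<delta> \<longrightarrow>
           norm (integral {a - 1..sigma T t} (step_ext T a f) - integral {a - 1..s} (step_ext T a f)
                                - (sigma T t - s) *\<^sub>R f t) \<le> \<epsilon> * \<bar>sigma T t - s\<bar>"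
proof -
  define e where "e = step_ext T a f"
  define Ph where "Ph r = integral {a - 1..r} e" for r
  have Phd: "Ph v - Ph u = integral {u..v} e" if "a - 1 \<le> u" "u \<le> v" for u v
    using step_ext_integral_split[OF cl aT rd that] unfolding Ph_def e_def by (metis add_diff_cancel_left')
  have ie: "e integrable_on {lo..hi}" for lo hi unfolding e_def by (rule step_ext_integrable[OF cl aT rd])
  have et: "e t = f t" using ts_floor_self[OF cl tT] at unfolding e_def step_ext_def by auto
  define \<mu> where "\<mu> = sigma T t - t"
  have mu: "\<mu> > 0" using rs unfolding \<mu>_def by simp
  have A: "Ph (sigma T t) - Ph t = \<mu> *\<^sub>R f t"
    using Phd[of t "sigma T t"] integral_step_ext_right_scattered[OF cl tT at rs, of f] at rs
    unfolding e_def \<mu>_def by simp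
  obtain \<delta>1 L where d1: "\<delta>1 > 0" "\<And>x. t - \<delta>1 < x \<and> x < t \<Longrightarrow> norm (e x - L) \<le> 1"
    using step_ext_left_approx[OF cl aT rd, of 1 t] unfolding e_def by auto
  define M where "M = 1 + norm (L - f t)"
  have M: "M \<ge> 1" unfolding M_def by simp
  have Mb: "norm (e x - f t) \<le> M" if "t - \<delta>1 < x" "x \<le> t" for x
  proof (cases "x = t")
    case True then show ?thesis using et M by simp
  next
    case False
    then have "norm (e x - L) \<le> 1" using d1 that by auto
    then show ?thesis unfolding M_def using norm_triangle_ineq[of "e x - L" "L - f t"] by simp
  qed
  define \<delta> where "\<delta> = min (min 1 \<delta>1) (min \<mu> (\<epsilon> * \<mu> / M))"
  have dp: "\<delta> > 0" "\<delta> \<le> 1" "\<delta> \<le> \<delta>1" "\<delta> \<le> \<mu>" "\<delta> \<le> \<epsilon> * \<mu> / M"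
    using d1 mu ep M unfolding \<delta>_def by auto
  then have dp5: "\<delta> * M \<le> \<epsilon> * \<mu>" using M by (simp add: le_divide_eq)
  have "\<exists>\<delta>>0. \<forall>s\<in>T. \<bar>t - s\<bar> < \<delta> \<longrightarrow> norm (Ph (sigma T t) - Ph s - (sigma T t - s) *\<^sub>R f t) \<le> \<epsilon> * \<bar>sigma T t - s\<bar>"
  proof (intro exI[of _ \<delta>] conjI ballI impI)
    fix s assume sT: "s \<in> T" and st: "\<bar>t - s\<bar> < \<delta>"
    have "s \<le> t"
    proof (rule ccontr)
      assume "\<not> s \<le> t" then have "t < s" "s < sigma T t" using st dp unfolding \<mu>_def by auto
      then show False using sigma_no_point_between sT by blast
    qed
    have eq: "Ph (sigma T t) - Ph s - (sigma T t - s) *\<^sub>R f t =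
              (integral {s..t} e - (t - s) *\<^sub>R f t) + (Ph (sigma T t) - Ph t - \<mu> *\<^sub>R f t)"
      using Phd[of s t] \<open>s \<le> t\<close> st dp at unfolding \<mu>_def by (simp add: algebra_simps)
    have "norm (integral {s..t} e - (t - s) *\<^sub>R f t) \<le> M * (t - s)"
      by (rule integral_near_const[OF \<open>s \<le> t\<close> ie]) (use st dp Mb in auto)
    also have "\<dots> \<le> M * \<delta>" using st M \<open>s \<le> t\<close> by auto
    also have "\<dots> \<le> \<epsilon> * \<mu>" using dp5 by (simp add: mult.commute)
    also have "\<dots> \<le> \<epsilon> * \<bar>sigma T t - s\<bar>" using ep \<open>s \<le> t\<close> unfolding \<mu>_def by auto
    finally show "norm (Ph (sigma T t) - Ph s - (sigma T t - s) *\<^sub>R f t) \<le> \<epsilon> * \<bar>sigma T t - s\<bar>"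
      using eq A by simp
  qed (use dp in auto)
  then show ?thesis unfolding Ph_def e_def .
qed

lemma step_ext_integral_delta_estimate_right_dense:
  fixes f :: "real \<Rightarrow> 'a::banach"
  assumes cl: "closed T" and aT: "a \<in> T" and rd: "rd_cont_from T a f" and tT: "t \<in> T" and at: "a \<le> t"
    and st: "sigma T t = t" and ep: "\<epsilon> > 0"
  shows "\<exists>\<delta>>0. \<forall>s\<in>T. \<bar>t - s\<bar> < \<delta> \<longrightarrow>
           norm (integral {a - 1..sigma T t} (step_ext T a f) - integral {a - 1..s} (step_ext T a f)
                                - (sigma T t - s) *\<^sub>R f t) \<le> \<epsilon> * \<bar>sigma T t - s\<bar>"
proof -
  define e where "e = step_ext T a f"
  define Ph where "Ph r = integral {a - 1..r} e" for r
  have Phd: "Ph v - Ph u = integral {u..v} e" if "a - 1 \<le> u" "u \<le> v" for u v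
    using step_ext_integral_split[OF cl aT rd that] unfolding Ph_def e_def by (metis add_diff_cancel_left')
  have ie: "e integrable_on {lo..hi}" for lo hi unfolding e_def by (rule step_ext_integrable[OF cl aT rd])
  obtain \<delta>0 where d0: "\<delta>0 > 0" "\<forall>y\<in>T. a \<le> y \<longrightarrow> \<bar>y - t\<bar> < \<delta>0 \<longrightarrow> norm (f y - f t) \<le> \<epsilon>"
    using rd_cont_from_right_dense[OF rd tT at st ep] by blast
  define \<delta> where "\<delta> = min 1 \<delta>0"
  have dp: "\<delta> > 0" "\<delta> \<le> 1" "\<delta> \<le> \<delta>0" using d0 unfolding \<delta>_def by auto
  have "\<exists>\<delta>>0. \<forall>s\<in>T. \<bar>t - s\<bar> < \<delta> \<longrightarrow> norm (Ph (sigma T t) - Ph s - (sigma T t - s) *\<^sub>R f t) \<le> \<epsilon> * \<bar>sigma T t - s\<bar>"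
  proof (intro exI[of _ \<delta>] conjI ballI impI)
    fix s assume sT: "s \<in> T" and ts: "\<bar>t - s\<bar> < \<delta>"
    show "norm (Ph (sigma T t) - Ph s - (sigma T t - s) *\<^sub>R f t) \<le> \<epsilon> * \<bar>sigma T t - s\<bar>"
    proof (cases "s \<le> t")
      case True
      have b: "norm (e x - f t) \<le> \<epsilon>" if "x \<in> {s..t}" for x
      proof (cases "x < a")
        case True
        then show ?thesis using d0 aT at that ts dp unfolding e_def step_ext_def by auto
      next
        case False
        have "ts_floor T x \<in> T" "a \<le> ts_floor T x" "ts_floor T x \<le> x" using ts_floor_props[OF cl aT, of x] False by auto
        moreover have "s \<le> ts_floor T x" using ts_floor_upper[OF sT] that by auto
        ultimately show ?thesis using d0 False that ts dp unfolding e_def step_ext_def by auto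
      qed
      have "norm (integral {s..t} e - (t - s) *\<^sub>R f t) \<le> \<epsilon> * (t - s)"
        by (rule integral_near_const[OF True ie b])
      moreover have "Ph t - Ph s = integral {s..t} e" using Phd[of s t] True ts dp at by auto
      ultimately show ?thesis using st True by simp
    next
      case False
      have b: "norm (e x - f t) \<le> \<epsilon>" if "x \<in> {t..s}" for x
      proof -
        have "ts_floor T x \<in> T" "a \<le> ts_floor T x" "ts_floor T x \<le> x" using ts_floor_props[OF cl aT, of x] that at by auto
        moreover have "t \<le> ts_floor T x" using ts_floor_upper[OF tT] that by auto
        ultimately show ?thesis using d0 that ts dp at unfolding e_def step_ext_def by auto
      qed
      have "norm (integral {t..s} e - (s - t) *\<^sub>R f t) \<le> \<epsilon> * (s - t)"
        using False by (intro integral_near_const[OF _ ie b]) auto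
      moreover have "Ph s - Ph t = integral {t..s} e" using Phd[of t s] False at by auto
      moreover have "Ph t - Ph s - (t - s) *\<^sub>R f t = - (integral {t..s} e - (s - t) *\<^sub>R f t)"
        using calculation(2) by (simp add: algebra_simps)
      ultimately show ?thesis using st False by (simp only: norm_minus_cancel) simp
    qed
  qed (use dp in auto)
  then show ?thesis unfolding Ph_def e_def .
qed

text \<open>The lower limit \<open>a - 1\<close> keeps the formula an antiderivative also at \<open>t = a\<close>, where the
  delta derivative involves points of \<open>T\<close> below \<open>a\<close>.\<close>

lemma has_delta_derivative_step_ext_integral:
  fixes f :: "real \<Rightarrow> 'a::banach"
  assumes "closed T" "a \<in> T" "rd_cont_from T a f" "t \<in> T" "a \<le> t"
  shows "has_delta_derivative T (\<lambda>r. integral {a - 1..r} (step_ext T a f)) (f t) t"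
  unfolding has_delta_derivative_def
proof (intro allI impI)
  fix \<epsilon> :: real assume "\<epsilon> > 0"
  consider "t < sigma T t" | "sigma T t = t" using sigma_ge_self[of t T] by linarith
  then show "\<exists>\<delta>>0. \<forall>s\<in>T. \<bar>t - s\<bar> < \<delta> \<longrightarrow>
           norm (integral {a - 1..sigma T t} (step_ext T a f) - integral {a - 1..s} (step_ext T a f)
                                - (sigma T t - s) *\<^sub>R f t) \<le> \<epsilon> * \<bar>sigma T t - s\<bar>"
    by cases (use step_ext_integral_delta_estimate_right_scattered[OF assms _ \<open>\<epsilon> > 0\<close>]
                  step_ext_integral_delta_estimate_right_dense[OF assms _ \<open>\<epsilon> > 0\<close>] in auto)
qed

lemma has_delta_derivative_diff_zero:
  fixes F G :: "real \<Rightarrow> 'a::real_normed_vector"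
  assumes "has_delta_derivative T F D t" "has_delta_derivative T G D t"
  shows "has_delta_derivative T (\<lambda>r. F r - G r) 0 t"
  unfolding has_delta_derivative_zero_iff
proof (intro allI impI)
  fix \<epsilon> :: real assume ep: "\<epsilon> > 0"
  obtain d1 where d1: "d1 > 0" "\<forall>s\<in>T. \<bar>t - s\<bar> < d1 \<longrightarrow>
      norm (F (sigma T t) - F s - (sigma T t - s) *\<^sub>R D) \<le> \<epsilon>/2 * \<bar>sigma T t - s\<bar>"
    using assms(1) ep unfolding has_delta_derivative_def by (meson half_gt_zero)
  obtain d2 where d2: "d2 > 0" "\<forall>s\<in>T. \<bar>t - s\<bar> < d2 \<longrightarrow>
      norm (G (sigma T t) - G s - (sigma T t - s) *\<^sub>R D) \<le> \<epsilon>/2 * \<bar>sigma T t - s\<bar>"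
    using assms(2) ep unfolding has_delta_derivative_def by (meson half_gt_zero)
  show "\<exists>\<delta>>0. \<forall>s\<in>T. \<bar>t - s\<bar> < \<delta> \<longrightarrow>
      norm (F (sigma T t) - G (sigma T t) - (F s - G s)) \<le> \<epsilon> * \<bar>sigma T t - s\<bar>"
  proof (intro exI[of _ "min d1 d2"] conjI ballI impI)
    fix s assume "s \<in> T" "\<bar>t - s\<bar> < min d1 d2"
    then have d12: "norm (F (sigma T t) - F s - (sigma T t - s) *\<^sub>R D) \<le> \<epsilon>/2 * \<bar>sigma T t - s\<bar>"
      "norm (G (sigma T t) - G s - (sigma T t - s) *\<^sub>R D) \<le> \<epsilon>/2 * \<bar>sigma T t - s\<bar>"
      using d1 d2 by auto
    have "F (sigma T t) - G (sigma T t) - (F s - G s) =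
      (F (sigma T t) - F s - (sigma T t - s) *\<^sub>R D) - (G (sigma T t) - G s - (sigma T t - s) *\<^sub>R D)"
      by (simp add: algebra_simps)
    then have "norm (F (sigma T t) - G (sigma T t) - (F s - G s)) \<le>
      norm (F (sigma T t) - F s - (sigma T t - s) *\<^sub>R D) + norm (G (sigma T t) - G s - (sigma T t - s) *\<^sub>R D)"
      by (simp only: norm_triangle_ineq4)
    moreover have "\<epsilon>/2 * \<bar>sigma T t - s\<bar> + \<epsilon>/2 * \<bar>sigma T t - s\<bar> = \<epsilon> * \<bar>sigma T t - s\<bar>" by simp
    ultimately show "norm (F (sigma T t) - G (sigma T t) - (F s - G s)) \<le> \<epsilon> * \<bar>sigma T t - s\<bar>"
      using d12 by linarith
  qed (use d1 d2 in auto)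
qed

lemma delta_integral_eq_integral_diff:
  fixes f :: "real \<Rightarrow> 'a::banach"
  assumes cl: "closed T" and aT: "a \<in> T" and rd: "rd_cont_from T a f"
    and uT: "u \<in> T" "a \<le> u" and vT: "v \<in> T" "a \<le> v"
  shows "delta_integral T f u v = integral {a..v} (step_ext T a f) - integral {a..u} (step_ext T a f)"
proof -
  define Ph where "Ph r = integral {a - 1..r} (step_ext T a f)" for r
  have Pd: "has_delta_derivative T Ph (f t) t" if "t \<in> T" "a \<le> t" for t
    using has_delta_derivative_step_ext_integral[OF cl aT rd that] unfolding Ph_def .
  define P where "P w \<longleftrightarrow> (\<exists>F. (\<forall>t. in_Tkappa T t \<and> min u v \<le> t \<and> t \<le> max u v \<longrightarrow>
                        has_delta_derivative T F (f t) t) \<and> w = F v - F u)" for w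
  have "delta_integral T f u v = (THE w. P w)" unfolding delta_integral_def P_def ..
  also have "\<dots> = Ph v - Ph u"
  proof (rule the_equality)
    show "P (Ph v - Ph u)" unfolding P_def
      using Pd uT vT by (intro exI[of _ Ph]) (auto simp: in_Tkappa_def)
  next
    fix w assume "P w"
    then obtain G where G: "\<And>t. in_Tkappa T t \<Longrightarrow> min u v \<le> t \<Longrightarrow> t \<le> max u v \<Longrightarrow>
        has_delta_derivative T G (f t) t" and w: "w = G v - G u" unfolding P_def by blast
    have "(\<lambda>r. G r - Ph r) (max u v) = (\<lambda>r. G r - Ph r) (min u v)"
    proof (rule delta_derivative_zero_imp_eq[OF cl])
      show "min u v \<in> T" "max u v \<in> T" "min u v \<le> max u v" using uT vT by (auto simp: min_def max_def)
      fix t assume "t \<in> T" "min u v \<le> t" "t \<le> max u v" "in_Tkappa T t"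
      then show "has_delta_derivative T (\<lambda>r. G r - Ph r) 0 t"
        using G Pd uT vT by (intro has_delta_derivative_diff_zero) auto
    qed
    then show "w = Ph v - Ph u" unfolding w by (cases "u \<le> v") (auto simp: min_def max_def algebra_simps)
  qed
  also have "\<dots> = integral {a..v} (step_ext T a f) - integral {a..u} (step_ext T a f)"
  proof -
    have "Ph v = Ph a + integral {a..v} (step_ext T a f)" "Ph u = Ph a + integral {a..u} (step_ext T a f)"
      unfolding Ph_def using uT vT by (intro step_ext_integral_split[OF cl aT rd]; simp)+
    then show ?thesis by (simp add: algebra_simps)
  qed
  finally show ?thesis .
qed

section \<open>Closure properties of rd-continuity\<close>

lemma rd_cont_from_cong:
  assumes f: "rd_cont_from T a f" and eq: "\<And>s. s \<in> T \<Longrightarrow> a \<le> s \<Longrightarrow> f s = g s"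
  shows "rd_cont_from T a g"
  unfolding rd_cont_from_def
proof (intro conjI ballI impI allI)
  fix t \<epsilon> :: real assume t: "t \<in> T" "a \<le> t" "sigma T t = t" "\<epsilon> > 0"
  then show "\<exists>\<delta>>0. \<forall>y\<in>T. a \<le> y \<longrightarrow> \<bar>y - t\<bar> < \<delta> \<longrightarrow> norm (g y - g t) \<le> \<epsilon>"
    using rd_cont_from_right_dense[OF f t(1-3) t(4)] eq by (metis (no_types, lifting))
next
  fix t \<epsilon> :: real assume t: "t \<in> T" "a < t" "left_dense T t" "\<epsilon> > 0"
  then show "\<exists>\<delta>>0. \<exists>L. \<forall>y\<in>T. a \<le> y \<longrightarrow> t - \<delta> < y \<longrightarrow> y < t \<longrightarrow> norm (g y - L) \<le> \<epsilon>"
    using rd_cont_from_left_dense[OF f t(1-3) t(4)] eq by (metis (no_types, lifting))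
qed

lemma rd_continuous_on_imp_rd_cont_from:
  assumes "rd_continuous_on T ({a..} \<inter> T) f"
  shows "rd_cont_from T a f"
  unfolding rd_cont_from_def
proof (intro conjI ballI impI allI)
  fix t \<epsilon> :: real assume t: "t \<in> T" "a \<le> t" "sigma T t = t" "\<epsilon> > 0"
  then have "continuous (at t within ({a..} \<inter> T)) f" using assms unfolding rd_continuous_on_def by auto
  then obtain \<delta> where "\<delta> > 0" "\<forall>y\<in>{a..} \<inter> T. dist y t < \<delta> \<longrightarrow> dist (f y) (f t) < \<epsilon>"
    using t(4) unfolding continuous_within_eps_delta by blast
  then show "\<exists>\<delta>>0. \<forall>y\<in>T. a \<le> y \<longrightarrow> \<bar>y - t\<bar> < \<delta> \<longrightarrow> norm (f y - f t) \<le> \<epsilon>"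
    by (intro exI[of _ \<delta>]) (auto simp: dist_norm intro: less_imp_le)
next
  fix t \<epsilon> :: real assume t: "t \<in> T" "a < t" "left_dense T t" "\<epsilon> > 0"
  then obtain L where "(f \<longlongrightarrow> L) (at t within ({a..} \<inter> T \<inter> {..<t}))"
    using assms left_dense_rho[OF t(3)] unfolding rd_continuous_on_def by auto
  then obtain \<delta> where d: "\<delta> > 0" "\<forall>y\<in>{a..} \<inter> T \<inter> {..<t}. 0 < dist y t \<and> dist y t < \<delta> \<longrightarrow> dist (f y) L < \<epsilon>"
    using t(4) unfolding Lim_within by blast
  show "\<exists>\<delta>>0. \<exists>L. \<forall>y\<in>T. a \<le> y \<longrightarrow> t - \<delta> < y \<longrightarrow> y < t \<longrightarrow> norm (f y - L) \<le> \<epsilon>"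
  proof (intro exI[of _ \<delta>] conjI exI[of _ L] ballI impI)
    fix y assume "y \<in> T" "a \<le> y" "t - \<delta> < y" "y < t"
    then show "norm (f y - L) \<le> \<epsilon>" using d by (auto simp: dist_norm intro: less_imp_le)
  qed (use d in auto)
qed

lemma continuous_on_imp_rd_cont_from:
  assumes "\<And>c. continuous_on {a..c} f"
  shows "rd_cont_from T a f"
  unfolding rd_cont_from_def
proof (intro conjI ballI impI allI)
  fix t \<epsilon> :: real assume t: "t \<in> T" "a \<le> t" "\<epsilon> > 0"
  obtain \<delta> where d: "\<delta> > 0" "\<forall>y\<in>{a..t+1}. dist y t < \<delta> \<longrightarrow> dist (f y) (f t) < \<epsilon>"
    using assms[of "t+1"] t unfolding continuous_on_iff by (metis atLeastAtMost_iff less_add_one order.strict_implies_order)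
  show "\<exists>\<delta>>0. \<forall>y\<in>T. a \<le> y \<longrightarrow> \<bar>y - t\<bar> < \<delta> \<longrightarrow> norm (f y - f t) \<le> \<epsilon>"
    using d by (intro exI[of _ "min \<delta> 1"]) (auto simp: dist_norm intro: less_imp_le)
next
  fix t \<epsilon> :: real assume t: "t \<in> T" "a < t" "left_dense T t" "\<epsilon> > 0"
  obtain \<delta> where d: "\<delta> > 0" "\<forall>y\<in>{a..t+1}. dist y t < \<delta> \<longrightarrow> dist (f y) (f t) < \<epsilon>"
    using assms[of "t+1"] t unfolding continuous_on_iff by (metis atLeastAtMost_iff less_add_one less_imp_le)
  show "\<exists>\<delta>>0. \<exists>L. \<forall>y\<in>T. a \<le> y \<longrightarrow> t - \<delta> < y \<longrightarrow> y < t \<longrightarrow> norm (f y - L) \<le> \<epsilon>"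
    using d by (intro exI[of _ "\<delta>"] conjI exI[of _ "f t"]) (auto simp: dist_norm intro: less_imp_le)
qed

lemma rd_cont_from_const: "rd_cont_from T a (\<lambda>_. c)"
  by (rule continuous_on_imp_rd_cont_from) (rule continuous_on_const)

lemma rd_cont_from_diff:
  fixes f g :: "real \<Rightarrow> 'a::real_normed_vector"
  assumes f: "rd_cont_from T a f" and g: "rd_cont_from T a g"
  shows "rd_cont_from T a (\<lambda>s. f s - g s)"
  unfolding rd_cont_from_def
proof (intro conjI ballI impI allI)
  fix t \<epsilon> :: real assume t: "t \<in> T" "a \<le> t" "sigma T t = t" "\<epsilon> > 0"
  obtain d1 where d1: "d1 > 0" "\<forall>y\<in>T. a \<le> y \<longrightarrow> \<bar>y - t\<bar> < d1 \<longrightarrow> norm (f y - f t) \<le> \<epsilon>/2"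
    using rd_cont_from_right_dense[OF f t(1-3), of "\<epsilon>/2"] t(4) by auto
  obtain d2 where d2: "d2 > 0" "\<forall>y\<in>T. a \<le> y \<longrightarrow> \<bar>y - t\<bar> < d2 \<longrightarrow> norm (g y - g t) \<le> \<epsilon>/2"
    using rd_cont_from_right_dense[OF g t(1-3), of "\<epsilon>/2"] t(4) by auto
  show "\<exists>\<delta>>0. \<forall>y\<in>T. a \<le> y \<longrightarrow> \<bar>y - t\<bar> < \<delta> \<longrightarrow> norm (f y - g y - (f t - g t)) \<le> \<epsilon>"
  proof (intro exI[of _ "min d1 d2"] conjI ballI impI)
    fix y assume y: "y \<in> T" "a \<le> y" "\<bar>y - t\<bar> < min d1 d2"
    have "norm (f y - g y - (f t - g t)) \<le> norm (f y - f t) + norm (g y - g t)"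
      using norm_triangle_ineq4[of "f y - f t" "g y - g t"] by (simp add: algebra_simps)
    then show "norm (f y - g y - (f t - g t)) \<le> \<epsilon>" using d1 d2 y by force
  qed (use d1 d2 in auto)
next
  fix t \<epsilon> :: real assume t: "t \<in> T" "a < t" "left_dense T t" "\<epsilon> > 0"
  obtain d1 L1 where d1: "d1 > 0" "\<forall>y\<in>T. a \<le> y \<longrightarrow> t - d1 < y \<longrightarrow> y < t \<longrightarrow> norm (f y - L1) \<le> \<epsilon>/2"
    using rd_cont_from_left_dense[OF f t(1-3), of "\<epsilon>/2"] t(4) by auto
  obtain d2 L2 where d2: "d2 > 0" "\<forall>y\<in>T. a \<le> y \<longrightarrow> t - d2 < y \<longrightarrow> y < t \<longrightarrow> norm (g y - L2) \<le> \<epsilon>/2"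
    using rd_cont_from_left_dense[OF g t(1-3), of "\<epsilon>/2"] t(4) by auto
  show "\<exists>\<delta>>0. \<exists>L. \<forall>y\<in>T. a \<le> y \<longrightarrow> t - \<delta> < y \<longrightarrow> y < t \<longrightarrow> norm (f y - g y - L) \<le> \<epsilon>"
  proof (intro exI[of _ "min d1 d2"] conjI exI[of _ "L1 - L2"] ballI impI)
    fix y assume y: "y \<in> T" "a \<le> y" "t - min d1 d2 < y" "y < t"
    have "norm (f y - g y - (L1 - L2)) \<le> norm (f y - L1) + norm (g y - L2)"
      using norm_triangle_ineq4[of "f y - L1" "g y - L2"] by (simp add: algebra_simps)
    then show "norm (f y - g y - (L1 - L2)) \<le> \<epsilon>" using d1 d2 y by force
  qed (use d1 d2 in auto)
qed

lemma rd_cont_from_norm: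
  fixes f :: "real \<Rightarrow> 'a::real_normed_vector"
  assumes f: "rd_cont_from T a f"
  shows "rd_cont_from T a (\<lambda>s. norm (f s))"
  unfolding rd_cont_from_def
proof (intro conjI ballI impI allI)
  fix t \<epsilon> :: real assume t: "t \<in> T" "a \<le> t" "sigma T t = t" "\<epsilon> > 0"
  obtain d1 where d1: "d1 > 0" "\<forall>y\<in>T. a \<le> y \<longrightarrow> \<bar>y - t\<bar> < d1 \<longrightarrow> norm (f y - f t) \<le> \<epsilon>"
    using rd_cont_from_right_dense[OF f t(1-3) t(4)] by blast
  show "\<exists>\<delta>>0. \<forall>y\<in>T. a \<le> y \<longrightarrow> \<bar>y - t\<bar> < \<delta> \<longrightarrow> norm (norm (f y) - norm (f t)) \<le> \<epsilon>"
    using d1 norm_triangle_ineq3[of "f _" "f t"] by (intro exI[of _ d1]) (auto intro: order.trans)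
next
  fix t \<epsilon> :: real assume t: "t \<in> T" "a < t" "left_dense T t" "\<epsilon> > 0"
  obtain d1 L1 where d1: "d1 > 0" "\<forall>y\<in>T. a \<le> y \<longrightarrow> t - d1 < y \<longrightarrow> y < t \<longrightarrow> norm (f y - L1) \<le> \<epsilon>"
    using rd_cont_from_left_dense[OF f t(1-3) t(4)] by blast
  show "\<exists>\<delta>>0. \<exists>L. \<forall>y\<in>T. a \<le> y \<longrightarrow> t - \<delta> < y \<longrightarrow> y < t \<longrightarrow> norm (norm (f y) - L) \<le> \<epsilon>"
    using d1 norm_triangle_ineq3[of "f _" L1]
    by (intro exI[of _ d1] conjI exI[of _ "norm L1"]) (auto intro: order.trans)
qed

lemma abs_mult_diff_le:
  fixes x y L1 L2 :: real
  assumes "\<bar>x - L1\<bar> \<le> e1" "\<bar>y - L2\<bar> \<le> e2" "e1 \<le> 1" "e1 \<ge> 0" "e2 \<ge> 0"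
  shows "\<bar>x * y - L1 * L2\<bar> \<le> (\<bar>L1\<bar> + 1) * e2 + \<bar>L2\<bar> * e1"
proof -
  have "x * y - L1 * L2 = x * (y - L2) + L2 * (x - L1)" by (simp add: algebra_simps)
  then have "\<bar>x * y - L1 * L2\<bar> \<le> \<bar>x\<bar> * \<bar>y - L2\<bar> + \<bar>L2\<bar> * \<bar>x - L1\<bar>"
    by (metis abs_mult abs_triangle_ineq)
  moreover have "\<bar>x\<bar> \<le> \<bar>L1\<bar> + 1" using assms by linarith
  moreover have "\<bar>x\<bar> * \<bar>y - L2\<bar> \<le> (\<bar>L1\<bar> + 1) * e2"
    using assms calculation(2) by (intro mult_mono) auto
  moreover have "\<bar>L2\<bar> * \<bar>x - L1\<bar> \<le> \<bar>L2\<bar> * e1" using assms by (intro mult_left_mono) auto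
  ultimately show ?thesis by linarith
qed

lemma eps_split:
  fixes A B \<epsilon> :: real
  assumes "\<epsilon> > 0" "A \<ge> 0" "B \<ge> 0"
  defines "e \<equiv> min 1 (\<epsilon> / (2 * (A + B + 1)))"
  shows "0 < e" "e \<le> 1" "A * e + B * e \<le> \<epsilon>"
proof -
  show "0 < e" "e \<le> 1" using assms by auto
  have "e \<le> \<epsilon> / (2 * (A + B + 1))" unfolding e_def by simp
  then have "e * (2 * (A + B + 1)) \<le> \<epsilon>" using assms by (simp add: le_divide_eq)
  then have "2 * (A * e) + 2 * (B * e) + 2 * e \<le> \<epsilon>" by (simp add: algebra_simps)
  moreover have "0 \<le> A * e" "0 \<le> B * e" "0 \<le> e" using assms by auto
  ultimately show "A * e + B * e \<le> \<epsilon>" by linarith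
qed

lemma rd_cont_from_mult:
  fixes f g :: "real \<Rightarrow> real"
  assumes f: "rd_cont_from T a f" and g: "rd_cont_from T a g"
  shows "rd_cont_from T a (\<lambda>s. f s * g s)"
  unfolding rd_cont_from_def
proof (intro conjI ballI impI allI)
  fix t \<epsilon> :: real assume t: "t \<in> T" "a \<le> t" "sigma T t = t" "\<epsilon> > 0"
  define e where "e = min 1 (\<epsilon> / (2 * ((\<bar>f t\<bar> + 1) + \<bar>g t\<bar> + 1)))"
  have e: "e > 0" "e \<le> 1" "(\<bar>f t\<bar> + 1) * e + \<bar>g t\<bar> * e \<le> \<epsilon>"
    unfolding e_def by (rule eps_split[OF t(4)]; simp)+
  obtain d1 where d1: "d1 > 0" "\<forall>y\<in>T. a \<le> y \<longrightarrow> \<bar>y - t\<bar> < d1 \<longrightarrow> norm (f y - f t) \<le> e"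
    using rd_cont_from_right_dense[OF f t(1-3) e(1)] by blast
  obtain d2 where d2: "d2 > 0" "\<forall>y\<in>T. a \<le> y \<longrightarrow> \<bar>y - t\<bar> < d2 \<longrightarrow> norm (g y - g t) \<le> e"
    using rd_cont_from_right_dense[OF g t(1-3) e(1)] by blast
  show "\<exists>\<delta>>0. \<forall>y\<in>T. a \<le> y \<longrightarrow> \<bar>y - t\<bar> < \<delta> \<longrightarrow> norm (f y * g y - f t * g t) \<le> \<epsilon>"
  proof (intro exI[of _ "min d1 d2"] conjI ballI impI)
    fix y assume y: "y \<in> T" "a \<le> y" "\<bar>y - t\<bar> < min d1 d2"
    then have fg: "\<bar>f y - f t\<bar> \<le> e" "\<bar>g y - g t\<bar> \<le> e" using d1 d2 by auto
    have "\<bar>f y * g y - f t * g t\<bar> \<le> (\<bar>f t\<bar> + 1) * e + \<bar>g t\<bar> * e"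
      by (rule abs_mult_diff_le[OF fg e(2)]) (use e in auto)
    then show "norm (f y * g y - f t * g t) \<le> \<epsilon>" using e(3) by simp
  qed (use d1 d2 in auto)
next
  fix t \<epsilon> :: real assume t: "t \<in> T" "a < t" "left_dense T t" "\<epsilon> > 0"
  obtain d1 L1 where d1: "d1 > 0" "\<forall>y\<in>T. a \<le> y \<longrightarrow> t - d1 < y \<longrightarrow> y < t \<longrightarrow> norm (f y - L1) \<le> 1"
    using rd_cont_from_left_dense[OF f t(1-3), of 1] by auto
  obtain d2 L2 where d2: "d2 > 0" "\<forall>y\<in>T. a \<le> y \<longrightarrow> t - d2 < y \<longrightarrow> y < t \<longrightarrow> norm (g y - L2) \<le> 1"
    using rd_cont_from_left_dense[OF g t(1-3), of 1] by auto
  define e where "e = min 1 (\<epsilon> / (2 * ((\<bar>L1\<bar> + 3) + (\<bar>L2\<bar> + 2) + 1)))"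
  have e: "e > 0" "e \<le> 1" "(\<bar>L1\<bar> + 3) * e + (\<bar>L2\<bar> + 2) * e \<le> \<epsilon>"
    unfolding e_def by (rule eps_split[OF t(4)]; simp)+
  obtain d3 L3 where d3: "d3 > 0" "\<forall>y\<in>T. a \<le> y \<longrightarrow> t - d3 < y \<longrightarrow> y < t \<longrightarrow> norm (f y - L3) \<le> e"
    using rd_cont_from_left_dense[OF f t(1-3) e(1)] by blast
  obtain d4 L4 where d4: "d4 > 0" "\<forall>y\<in>T. a \<le> y \<longrightarrow> t - d4 < y \<longrightarrow> y < t \<longrightarrow> norm (g y - L4) \<le> e"
    using rd_cont_from_left_dense[OF g t(1-3) e(1)] by blast
  define d where "d = min (min d1 d2) (min (min d3 d4) (t - a))"
  have dp: "d > 0" "d \<le> d1" "d \<le> d2" "d \<le> d3" "d \<le> d4" "d \<le> t - a"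
    using d1 d2 d3 d4 t(2) unfolding d_def by auto
  obtain y0 where y0: "y0 \<in> T" "t - d < y0" "y0 < t"
    using t(3) dp(1) unfolding left_dense_def by blast
  have L3b: "\<bar>L3\<bar> + 1 \<le> \<bar>L1\<bar> + 3"
  proof -
    have "\<bar>f y0 - L1\<bar> \<le> 1" "\<bar>f y0 - L3\<bar> \<le> e" using d1 d3 y0 dp by auto
    then show ?thesis using e by linarith
  qed
  have L4b: "\<bar>L4\<bar> \<le> \<bar>L2\<bar> + 2"
  proof -
    have "\<bar>g y0 - L2\<bar> \<le> 1" "\<bar>g y0 - L4\<bar> \<le> e" using d2 d4 y0 dp by auto
    then show ?thesis using e by linarith
  qed
  have "\<forall>y\<in>T. a \<le> y \<longrightarrow> t - d < y \<longrightarrow> y < t \<longrightarrow> norm (f y * g y - L3 * L4) \<le> \<epsilon>"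
  proof (intro ballI impI)
    fix y assume y: "y \<in> T" "a \<le> y" "t - d < y" "y < t"
    then have fg: "\<bar>f y - L3\<bar> \<le> e" "\<bar>g y - L4\<bar> \<le> e" using d3 d4 dp by auto
    have "\<bar>f y * g y - L3 * L4\<bar> \<le> (\<bar>L3\<bar> + 1) * e + \<bar>L4\<bar> * e"
      by (rule abs_mult_diff_le[OF fg e(2)]) (use e in auto)
    moreover have "(\<bar>L3\<bar> + 1) * e \<le> (\<bar>L1\<bar> + 3) * e" using L3b e by (intro mult_right_mono) auto
    moreover have "\<bar>L4\<bar> * e \<le> (\<bar>L2\<bar> + 2) * e" using L4b e by (intro mult_right_mono) auto
    ultimately show "norm (f y * g y - L3 * L4) \<le> \<epsilon>" using e(3) by simp
  qed
  then show "\<exists>\<delta>>0. \<exists>L. \<forall>y\<in>T. a \<le> y \<longrightarrow> t - \<delta> < y \<longrightarrow> y < t \<longrightarrow> norm (f y * g y - L) \<le> \<epsilon>"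
    using dp(1) by blast
qed

lemma mult_eps_div_le_half:
  fixes K \<epsilon> :: real
  assumes "K \<ge> 0" "\<epsilon> > 0" shows "K * (\<epsilon> / (2 * (K + 1))) \<le> \<epsilon> / 2"
proof -
  have "K * (\<epsilon> / (2 * (K + 1))) = (\<epsilon> / 2) * (K / (K + 1))" by (simp add: field_simps)
  also have "\<dots> \<le> \<epsilon> / 2" by (rule mult_left_le) (use assms in auto)
  finally show ?thesis .
qed

lemma rd_cont_from_compose_lipschitz:
  fixes x :: "real \<Rightarrow> 'a::real_normed_vector" and k :: "real \<Rightarrow> 'a \<Rightarrow> 'b::real_normed_vector"
  assumes rd_x: "rd_cont_from T a x" and rd_k: "\<And>v. rd_cont_from T a (\<lambda>s. k s v)"
    and Lip: "\<And>t. \<exists>K\<ge>0. \<forall>s\<in>T. a \<le> s \<longrightarrow> s < t + 1 \<longrightarrow> (\<forall>v v'. norm (k s v - k s v') \<le> K * norm (v - v'))"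
  shows "rd_cont_from T a (\<lambda>s. k s (x s))"
  unfolding rd_cont_from_def
proof (intro conjI ballI impI allI)
  fix t \<epsilon> :: real assume t: "t \<in> T" "a \<le> t" "sigma T t = t" "\<epsilon> > 0"
  obtain K where K: "K \<ge> 0" "\<forall>s\<in>T. a \<le> s \<longrightarrow> s < t + 1 \<longrightarrow> (\<forall>v v'. norm (k s v - k s v') \<le> K * norm (v - v'))"
    using Lip[of t] by blast
  define e1 where "e1 = \<epsilon> / (2 * (K + 1))"
  have e1: "e1 > 0" "K * e1 \<le> \<epsilon>/2" using K t(4) mult_eps_div_le_half unfolding e1_def by auto
  obtain dx where dx: "dx > 0" "\<forall>y\<in>T. a \<le> y \<longrightarrow> \<bar>y - t\<bar> < dx \<longrightarrow> norm (x y - x t) \<le> e1"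
    using rd_cont_from_right_dense[OF rd_x t(1-3) e1(1)] by blast
  have "\<epsilon>/2 > 0" using t by simp
  then obtain dk where dk: "dk > 0" "\<forall>y\<in>T. a \<le> y \<longrightarrow> \<bar>y - t\<bar> < dk \<longrightarrow> norm (k y (x t) - k t (x t)) \<le> \<epsilon>/2"
    using rd_cont_from_right_dense[OF rd_k t(1-3)] by blast
  have "\<forall>y\<in>T. a \<le> y \<longrightarrow> \<bar>y - t\<bar> < min (min dx dk) 1 \<longrightarrow> norm (k y (x y) - k t (x t)) \<le> \<epsilon>"
  proof (intro ballI impI)
    fix y assume y: "y \<in> T" "a \<le> y" "\<bar>y - t\<bar> < min (min dx dk) 1"
    have "norm (k y (x y) - k y (x t)) \<le> K * norm (x y - x t)" using K y by auto
    also have "\<dots> \<le> K * e1" using dx y K by (intro mult_left_mono) auto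
    finally have 1: "norm (k y (x y) - k y (x t)) \<le> \<epsilon>/2" using e1 by linarith
    have 2: "norm (k y (x t) - k t (x t)) \<le> \<epsilon>/2" using dk y by auto
    show "norm (k y (x y) - k t (x t)) \<le> \<epsilon>" using norm_diff_triangle_le[OF 1 2] by simp
  qed
  then show "\<exists>\<delta>>0. \<forall>y\<in>T. a \<le> y \<longrightarrow> \<bar>y - t\<bar> < \<delta> \<longrightarrow> norm (k y (x y) - k t (x t)) \<le> \<epsilon>"
    using dx dk by (intro exI[of _ "min (min dx dk) 1"]) auto
next
  fix t \<epsilon> :: real assume t: "t \<in> T" "a < t" "left_dense T t" "\<epsilon> > 0"
  obtain K where K: "K \<ge> 0" "\<forall>s\<in>T. a \<le> s \<longrightarrow> s < t + 1 \<longrightarrow> (\<forall>v v'. norm (k s v - k s v') \<le> K * norm (v - v'))"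
    using Lip[of t] by blast
  define e1 where "e1 = \<epsilon> / (2 * (K + 1))"
  have e1: "e1 > 0" "K * e1 \<le> \<epsilon>/2" using K t(4) mult_eps_div_le_half unfolding e1_def by auto
  obtain dx Lx where dx: "dx > 0" "\<forall>y\<in>T. a \<le> y \<longrightarrow> t - dx < y \<longrightarrow> y < t \<longrightarrow> norm (x y - Lx) \<le> e1"
    using rd_cont_from_left_dense[OF rd_x t(1-3) e1(1)] by blast
  have "\<epsilon>/2 > 0" using t by simp
  then obtain dk Lk where dk: "dk > 0" "\<forall>y\<in>T. a \<le> y \<longrightarrow> t - dk < y \<longrightarrow> y < t \<longrightarrow> norm (k y Lx - Lk) \<le> \<epsilon>/2"
    using rd_cont_from_left_dense[OF rd_k t(1-3)] by blast
  have "\<forall>y\<in>T. a \<le> y \<longrightarrow> t - min dx dk < y \<longrightarrow> y < t \<longrightarrow> norm (k y (x y) - Lk) \<le> \<epsilon>"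
  proof (intro ballI impI)
    fix y assume y: "y \<in> T" "a \<le> y" "t - min dx dk < y" "y < t"
    have "norm (k y (x y) - k y Lx) \<le> K * norm (x y - Lx)" using K y by auto
    also have "\<dots> \<le> K * e1" using dx y K by (intro mult_left_mono) auto
    finally have 1: "norm (k y (x y) - k y Lx) \<le> \<epsilon>/2" using e1 by linarith
    have 2: "norm (k y Lx - Lk) \<le> \<epsilon>/2" using dk y by auto
    show "norm (k y (x y) - Lk) \<le> \<epsilon>" using norm_diff_triangle_le[OF 1 2] by simp
  qed
  then show "\<exists>\<delta>>0. \<exists>L. \<forall>y\<in>T. a \<le> y \<longrightarrow> t - \<delta> < y \<longrightarrow> y < t \<longrightarrow> norm (k y (x y) - L) \<le> \<epsilon>"
    using dx dk by (intro exI[of _ "min dx dk"] conjI exI[of _ Lk]) auto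
qed

section \<open>The cylinder transformation\<close>

lemma mu_nonneg: "mu T t \<ge> 0"
  unfolding mu_def using sigma_ge_self[where T=T and t=t] by simp

lemma xi_bounds:
  assumes "0 \<le> m" "0 \<le> p"
  shows "0 \<le> xi m p" "xi m p \<le> p"
proof -
  show "0 \<le> xi m p" using assms unfolding xi_def by auto
  show "xi m p \<le> p"
  proof (cases "m = 0")
    case False
    then have "m > 0" using assms by simp
    have "ln (1 + m * p) \<le> m * p" using assms by (intro ln_add_one_self_le_self) simp
    then show ?thesis using \<open>m > 0\<close> unfolding xi_def by (simp add: divide_le_eq mult.commute)
  qed (simp add: xi_def)
qed

lemma abs_xi_diff_le:
  assumes "0 \<le> m" "0 \<le> p" "m * p \<le> 1"
  shows "\<bar>xi m p - p\<bar> \<le> m * p\<^sup>2"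
proof (cases "m = 0")
  case False
  then have m: "m > 0" using assms by simp
  have "m * p - (m * p)\<^sup>2 \<le> ln (1 + m * p)" using assms by (intro ln_one_plus_pos_lower_bound) auto
  then have "(m * p - (m * p)\<^sup>2) / m \<le> xi m p" using m unfolding xi_def by (simp add: divide_right_mono)
  moreover have "(m * p - (m * p)\<^sup>2) / m = p - m * p\<^sup>2" using m by (simp add: field_simps power2_eq_square)
  ultimately have "p - m * p\<^sup>2 \<le> xi m p" by simp
  moreover have "xi m p \<le> p" using xi_bounds assms by auto
  ultimately show ?thesis by auto
qed (simp add: xi_def)

lemma abs_xi_diff_le_eps:
  assumes "0 \<le> m" "0 \<le> p" "\<epsilon> > 0" "m \<le> min (1 / (p + 1)) (\<epsilon> / (p\<^sup>2 + 1))"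
  shows "\<bar>xi m p - p\<bar> \<le> \<epsilon>"
proof -
  have "m * (p + 1) \<le> 1" using assms by (simp add: le_divide_eq add_nonneg_pos)
  then have mp: "m * p \<le> 1" using assms by (simp add: algebra_simps)
  have "m * (p\<^sup>2 + 1) \<le> \<epsilon>" using assms by (simp add: le_divide_eq add_nonneg_pos)
  then have "m * p\<^sup>2 \<le> \<epsilon>" using assms by (simp add: algebra_simps)
  then show ?thesis using abs_xi_diff_le[OF assms(1,2) mp] by linarith
qed

lemma exp_mult_xi:
  assumes "m > 0" "0 \<le> p" shows "exp (m * xi m p) = 1 + m * p"
proof -
  have "m * p \<ge> 0" using assms by simp
  then have "1 + m * p > 0" by linarith
  then show ?thesis using assms unfolding xi_def by simp
qed

lemma xi_ominus_eq:
  assumes "0 \<le> m" "0 \<le> p" "0 \<le> \<alpha>"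
  shows "xi m ((p - \<alpha>) / (1 + m * \<alpha>)) = xi m p - xi m \<alpha>"
proof (cases "m = 0")
  case False
  then have m: "m > 0" using assms by simp
  have "m * \<alpha> \<ge> 0" "m * p \<ge> 0" using m assms by auto
  then have d: "1 + m * \<alpha> > 0" "1 + m * p > 0" by linarith+
  have "1 + m * ((p - \<alpha>) / (1 + m * \<alpha>)) = (1 + m * p) / (1 + m * \<alpha>)"
    using d by (simp add: field_simps)
  then have "ln (1 + m * ((p - \<alpha>) / (1 + m * \<alpha>))) = ln (1 + m * p) - ln (1 + m * \<alpha>)"
    using d by (simp add: ln_div)
  then show ?thesis using m unfolding xi_def by (simp add: diff_divide_distrib)
qed (simp add: xi_def)

lemma mu_small_near_right_dense:
  assumes tT: "t \<in> T" and st: "sigma T t = t" and c: "c > 0"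
  shows "\<exists>\<delta>>0. \<forall>y\<in>T. \<bar>y - t\<bar> < \<delta> \<longrightarrow> mu T y \<le> c"
proof -
  have below: "mu T y \<le> t - y" if "y \<in> T" "y < t" for y
    using sigma_le_of_gt[OF tT that(2)] unfolding mu_def by simp
  have mut: "mu T t = 0" using st unfolding mu_def by simp
  show ?thesis
  proof (cases "\<exists>y0\<in>T. t < y0 \<and> y0 < t + c \<and> mu T y0 > c")
    case True
    then obtain y0 where y0: "y0 \<in> T" "t < y0" "y0 < t + c" by blast
    have "\<forall>y\<in>T. \<bar>y - t\<bar> < min c (y0 - t) \<longrightarrow> mu T y \<le> c"
    proof (intro ballI impI)
      fix y assume y: "y \<in> T" "\<bar>y - t\<bar> < min c (y0 - t)"
      consider "y < t" | "y = t" | "t < y" by linarith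
      then show "mu T y \<le> c"
      proof cases
        case 1 then show ?thesis using below y by force
      next
        case 2 then show ?thesis using mut c by simp
      next
        case 3
        then have "y < y0" using y by auto
        then have "sigma T y \<le> y0" using sigma_le_of_gt[OF y0(1)] by auto
        then show ?thesis using 3 y0 unfolding mu_def by auto
      qed
    qed
    then show ?thesis using y0 c by (intro exI[of _ "min c (y0 - t)"]) auto
  next
    case False
    have "\<forall>y\<in>T. \<bar>y - t\<bar> < c \<longrightarrow> mu T y \<le> c"
    proof (intro ballI impI)
      fix y assume y: "y \<in> T" "\<bar>y - t\<bar> < c"
      consider "y < t" | "y = t" | "t < y" by linarith
      then show "mu T y \<le> c"
      proof cases
        case 1 then show ?thesis using below y by force
      next
        case 2 then show ?thesis using mut c by simp
      next
        case 3 then show ?thesis using False y by force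
      qed
    qed
    then show ?thesis using c by blast
  qed
qed

lemma rd_cont_from_xi:
  assumes p: "p \<ge> 0"
  shows "rd_cont_from T a (\<lambda>\<tau>. xi (mu T \<tau>) p)"
  unfolding rd_cont_from_def
proof (intro conjI ballI impI allI)
  fix t \<epsilon> :: real assume t: "t \<in> T" "a \<le> t" "sigma T t = t" "\<epsilon> > 0"
  define c where "c = min (1 / (p + 1)) (\<epsilon> / (p\<^sup>2 + 1))"
  have c: "c > 0" using t p unfolding c_def by (auto simp: add_nonneg_pos)
  obtain \<delta> where d: "\<delta> > 0" "\<forall>y\<in>T. \<bar>y - t\<bar> < \<delta> \<longrightarrow> mu T y \<le> c" using mu_small_near_right_dense[OF t(1) t(3) c] by blast
  have mut: "mu T t = 0" using t(3) unfolding mu_def by simp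
  show "\<exists>\<delta>>0. \<forall>y\<in>T. a \<le> y \<longrightarrow> \<bar>y - t\<bar> < \<delta> \<longrightarrow> norm (xi (mu T y) p - xi (mu T t) p) \<le> \<epsilon>"
    using d abs_xi_diff_le_eps[OF mu_nonneg p t(4)] mut unfolding c_def
    by (intro exI[of _ \<delta>]) (auto simp: xi_def)
next
  fix t \<epsilon> :: real assume t: "t \<in> T" "a < t" "left_dense T t" "\<epsilon> > 0"
  define c where "c = min (1 / (p + 1)) (\<epsilon> / (p\<^sup>2 + 1))"
  have c: "c > 0" using t p unfolding c_def by (auto simp: add_nonneg_pos)
  have "\<forall>y\<in>T. a \<le> y \<longrightarrow> t - c < y \<longrightarrow> y < t \<longrightarrow> norm (xi (mu T y) p - p) \<le> \<epsilon>"
  proof (intro ballI impI)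
    fix y assume y: "y \<in> T" "a \<le> y" "t - c < y" "y < t"
    have "mu T y \<le> t - y" using sigma_le_of_gt[OF t(1) y(4)] unfolding mu_def by simp
    then have "mu T y \<le> c" using y by simp
    then show "norm (xi (mu T y) p - p) \<le> \<epsilon>" using abs_xi_diff_le_eps[OF mu_nonneg p t(4)] unfolding c_def by auto
  qed
  then show "\<exists>\<delta>>0. \<exists>L. \<forall>y\<in>T. a \<le> y \<longrightarrow> t - \<delta> < y \<longrightarrow> y < t \<longrightarrow> norm (xi (mu T y) p - L) \<le> \<epsilon>"
    using c by blast
qed

section \<open>Delta integral calculus\<close>

lemma delta_integral_eq_integral:
  fixes f :: "real \<Rightarrow> 'a::banach"
  assumes "closed T" "a \<in> T" "rd_cont_from T a f" "t \<in> T" "a \<le> t"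
  shows "delta_integral T f a t = integral {a..t} (step_ext T a f)"
  using delta_integral_eq_integral_diff[OF assms(1-3) assms(2) order_refl assms(4,5)] by simp

lemma delta_integral_diff:
  fixes f g :: "real \<Rightarrow> 'a::banach"
  assumes cl: "closed T" and aT: "a \<in> T" and f: "rd_cont_from T a f" and g: "rd_cont_from T a g"
    and t: "t \<in> T" "a \<le> t"
  shows "delta_integral T (\<lambda>s. f s - g s) a t = delta_integral T f a t - delta_integral T g a t"
  unfolding delta_integral_eq_integral[OF cl aT f t] delta_integral_eq_integral[OF cl aT g t]
    delta_integral_eq_integral[OF cl aT rd_cont_from_diff[OF f g] t]
proof -
  have "integral {a..t} (step_ext T a (\<lambda>s. f s - g s)) =
        integral {a..t} (\<lambda>r. step_ext T a f r - step_ext T a g r)"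
    by (rule integral_cong) (simp add: step_ext_def)
  also have "\<dots> = integral {a..t} (step_ext T a f) - integral {a..t} (step_ext T a g)"
    by (intro Henstock_Kurzweil_Integration.integral_diff step_ext_integrable[OF cl aT] f g)
  finally show "integral {a..t} (step_ext T a (\<lambda>s. f s - g s)) =
      integral {a..t} (step_ext T a f) - integral {a..t} (step_ext T a g)" .
qed

lemma delta_integral_mult_left:
  fixes f :: "real \<Rightarrow> real"
  assumes cl: "closed T" and aT: "a \<in> T" and f: "rd_cont_from T a f" and t: "t \<in> T" "a \<le> t"
  shows "delta_integral T (\<lambda>s. c * f s) a t = c * delta_integral T f a t"
proof -
  have "integral {a..t} (step_ext T a (\<lambda>s. c * f s)) = integral {a..t} (\<lambda>r. c * step_ext T a f r)"
    by (rule integral_cong) (simp add: step_ext_def)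
  then show ?thesis
    unfolding delta_integral_eq_integral[OF cl aT f t]
      delta_integral_eq_integral[OF cl aT rd_cont_from_mult[OF rd_cont_from_const f] t] by simp
qed

lemma norm_delta_integral_le:
  fixes f :: "real \<Rightarrow> 'a::banach"
  assumes cl: "closed T" and aT: "a \<in> T" and f: "rd_cont_from T a f" and w: "rd_cont_from T a w"
    and t: "t \<in> T" "a \<le> t"
    and bound: "\<And>s. s \<in> T \<Longrightarrow> a \<le> s \<Longrightarrow> s \<le> t \<Longrightarrow> norm (f s) \<le> w s"
  shows "norm (delta_integral T f a t) \<le> delta_integral T w a t"
  unfolding delta_integral_eq_integral[OF cl aT f t] delta_integral_eq_integral[OF cl aT w t]
proof (rule integral_norm_bound_integral[OF step_ext_integrable step_ext_integrable, OF cl aT f cl aT w])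
  fix r assume r: "r \<in> {a..t}"
  then have "ts_floor T r \<in> T" "a \<le> ts_floor T r" "ts_floor T r \<le> t"
    using ts_floor_props[OF cl aT, of r] by auto
  then show "norm (step_ext T a f r) \<le> step_ext T a w r" using bound r by (simp add: step_ext_def)
qed

lemma delta_integral_mono:
  fixes f g :: "real \<Rightarrow> real"
  assumes cl: "closed T" and aT: "a \<in> T" and f: "rd_cont_from T a f" and g: "rd_cont_from T a g"
    and t: "t \<in> T" "a \<le> t"
    and le: "\<And>s. s \<in> T \<Longrightarrow> a \<le> s \<Longrightarrow> s \<le> t \<Longrightarrow> f s \<le> g s"
  shows "delta_integral T f a t \<le> delta_integral T g a t"
  unfolding delta_integral_eq_integral[OF cl aT f t] delta_integral_eq_integral[OF cl aT g t]
proof (rule integral_le[OF step_ext_integrable step_ext_integrable, OF cl aT f cl aT g])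
  fix r assume r: "r \<in> {a..t}"
  then have "ts_floor T r \<in> T" "a \<le> ts_floor T r" "ts_floor T r \<le> t"
    using ts_floor_props[OF cl aT, of r] by auto
  then show "step_ext T a f r \<le> step_ext T a g r" using le r by (simp add: step_ext_def)
qed

lemma delta_integral_nonneg:
  fixes f :: "real \<Rightarrow> real"
  assumes cl: "closed T" and aT: "a \<in> T" and f: "rd_cont_from T a f" and t: "t \<in> T" "a \<le> t"
    and nonneg: "\<And>s. s \<in> T \<Longrightarrow> a \<le> s \<Longrightarrow> s \<le> t \<Longrightarrow> 0 \<le> f s"
  shows "0 \<le> delta_integral T f a t"
  unfolding delta_integral_eq_integral[OF cl aT f t]
proof (rule integral_nonneg[OF step_ext_integrable[OF cl aT f]])
  fix r assume r: "r \<in> {a..t}"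
  then have "ts_floor T r \<in> T" "a \<le> ts_floor T r" "ts_floor T r \<le> t"
    using ts_floor_props[OF cl aT, of r] by auto
  then show "0 \<le> step_ext T a f r" using nonneg r by (simp add: step_ext_def)
qed

section \<open>The exponential function\<close>

text \<open>The logarithm of \<open>e\<^sub>p(r, a)\<close>, extended to all real \<open>r\<close> as a continuous function.\<close>

definition ts_exp_log :: "real set \<Rightarrow> real \<Rightarrow> real \<Rightarrow> real \<Rightarrow> real" where
  "ts_exp_log T a p r = integral {a..r} (step_ext T a (\<lambda>\<tau>. xi (mu T \<tau>) p))"

lemma ts_exp_log_mono:
  assumes cl: "closed T" and aT: "a \<in> T" and p: "0 \<le> p" and "a \<le> s" "s \<le> s'"
  shows "ts_exp_log T a p s \<le> ts_exp_log T a p s'"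
proof -
  have rd: "rd_cont_from T a (\<lambda>\<tau>. xi (mu T \<tau>) p)" by (rule rd_cont_from_xi[OF p])
  have "0 \<le> integral {s..s'} (step_ext T a (\<lambda>\<tau>. xi (mu T \<tau>) p))"
    by (rule integral_nonneg[OF step_ext_integrable[OF cl aT rd]])
       (use xi_bounds[OF mu_nonneg p] in \<open>auto simp: step_ext_def\<close>)
  then show ?thesis using step_ext_integral_split[OF cl aT rd assms(4,5)] unfolding ts_exp_log_def by simp
qed

lemma continuous_on_ts_exp_log:
  assumes "closed T" "a \<in> T" "0 \<le> p"
  shows "continuous_on {a..c} (ts_exp_log T a p)"
  unfolding ts_exp_log_def
  by (rule indefinite_integral_continuous_1[OF step_ext_integrable[OF assms(1,2) rd_cont_from_xi[OF assms(3)]]])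

lemma ts_exp_const_eq_exp:
  assumes cl: "closed T" and aT: "a \<in> T" and p: "0 \<le> p"
    and s: "s \<in> T" "a \<le> s" and t: "t \<in> T" "a \<le> t"
  shows "ts_exp T (\<lambda>_. p) s t = exp (ts_exp_log T a p s - ts_exp_log T a p t)"
  unfolding ts_exp_def ts_exp_log_def
  using delta_integral_eq_integral_diff[OF cl aT rd_cont_from_xi[OF p] t s] by simp

lemma ts_exp_const_base:
  assumes "closed T" "a \<in> T" "0 \<le> p" "s \<in> T" "a \<le> s"
  shows "ts_exp T (\<lambda>_. p) s a = exp (ts_exp_log T a p s)"
  using ts_exp_const_eq_exp[OF assms assms(2) order_refl] by (simp add: ts_exp_log_def)

lemma ts_exp_const_quotient:
  assumes "closed T" "a \<in> T" "0 \<le> p" "s \<in> T" "a \<le> s" "t \<in> T" "a \<le> t"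
  shows "ts_exp T (\<lambda>_. p) s t = ts_exp T (\<lambda>_. p) s a / ts_exp T (\<lambda>_. p) t a"
  using ts_exp_const_eq_exp[OF assms] ts_exp_const_base[OF assms(1-5)] ts_exp_const_base[OF assms(1-3,6,7)]
  by (simp add: exp_diff)

lemma ts_exp_pos: "0 < ts_exp T p t s"
  by (simp add: ts_exp_def)

lemma rd_cont_from_ts_exp_const:
  assumes "closed T" "a \<in> T" "0 \<le> p"
  shows "rd_cont_from T a (\<lambda>s. ts_exp T (\<lambda>_. p) s a)"
  by (rule rd_cont_from_cong[OF continuous_on_imp_rd_cont_from[of a "\<lambda>s. exp (ts_exp_log T a p s)"]])
     (auto intro!: continuous_intros continuous_on_ts_exp_log assms simp: ts_exp_const_base[OF assms])

lemma ts_exp_ominus_const: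
  assumes cl: "closed T" and aT: "a \<in> T" and p: "0 \<le> p" and \<alpha>: "0 \<le> \<alpha>" and t: "t \<in> T" "a \<le> t"
  shows "ts_exp T (ts_ominus T (\<lambda>_. p) (\<lambda>_. \<alpha>)) t a = ts_exp T (\<lambda>_. p) t a / ts_exp T (\<lambda>_. \<alpha>) t a"
proof -
  have "(\<lambda>\<tau>. xi (mu T \<tau>) (ts_ominus T (\<lambda>_. p) (\<lambda>_. \<alpha>) \<tau>)) = (\<lambda>\<tau>. xi (mu T \<tau>) p - xi (mu T \<tau>) \<alpha>)"
    by (auto simp: ts_ominus_def xi_ominus_eq[OF mu_nonneg p \<alpha>])
  then show ?thesis
    unfolding ts_exp_def
    by (simp add: delta_integral_diff[OF cl aT rd_cont_from_xi[OF p] rd_cont_from_xi[OF \<alpha>] t] exp_diff)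
qed

section \<open>Gronwall's inequality\<close>

lemma gronwall_step_estimate:
  fixes Vs Es p \<eta> h \<epsilon> Vy Ey us :: real
  assumes Vs: "Vs \<ge> 0" and Es: "Es > 0" and p: "p \<ge> 0" and eta: "0 < \<eta>" "\<eta> \<le> 1"
    and etab: "\<eta> * (p + Vs) \<le> \<epsilon> * Es / 2" and h: "0 \<le> h" "h \<le> 1/2" and ep: "\<epsilon> > 0"
    and us: "us \<le> Vs"
    and Vy: "Vy \<le> Vs + p * (h * (us + \<eta>))"
    and Ey: "Es * (1 + h * (p - \<eta>)) \<le> Ey"
  shows "Vy / Ey \<le> Vs / Es + \<epsilon> * h"
proof -
  have q: "1 + h * (p - \<eta>) \<ge> 1/2"
  proof -
    have "h * \<eta> \<le> 1/2 * 1" using h eta by (intro mult_mono) auto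
    moreover have "h * p \<ge> 0" using h p by simp
    ultimately show ?thesis by (simp add: algebra_simps)
  qed
  have "Es * (1 + h * (p - \<eta>)) > 0" using Es q by simp
  then have Eypos: "Ey > 0" using Ey by linarith
  have V1: "Vy \<le> Vs * (1 + p * h) + p * h * \<eta>"
  proof -
    have "p * (h * us) \<le> p * (h * Vs)" using us p h by (intro mult_left_mono) auto
    then show ?thesis using Vy by (simp add: algebra_simps)
  qed
  have key: "h * (\<eta> * (p + Vs)) \<le> h * (\<epsilon> * Es / 2)" using etab h by (intro mult_left_mono) auto
  have "\<epsilon> * h * Es * (1/2) \<le> \<epsilon> * h * Es * (1 + h * (p - \<eta>))"
    using q ep h Es by (intro mult_left_mono) auto
  then have "Vy \<le> (Vs / Es + \<epsilon> * h) * (Es * (1 + h * (p - \<eta>)))"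
    using V1 key Es by (simp add: algebra_simps)
  also have "\<dots> \<le> (Vs / Es + \<epsilon> * h) * Ey"
    using Ey Vs Es ep h by (intro mult_left_mono) auto
  finally show ?thesis using Eypos by (simp add: divide_le_eq)
qed

lemma time_scale_le_of_local_estimates:
  fixes Z :: "real \<Rightarrow> real"
  assumes cl: "closed T" and aT: "a \<in> T" and bT: "b \<in> T" and ab: "a \<le> b"
    and cont: "continuous_on {a..b} Z"
    and right_scattered: "\<And>s. s \<in> T \<Longrightarrow> a \<le> s \<Longrightarrow> s < b \<Longrightarrow> s < sigma T s \<Longrightarrow> Z (sigma T s) \<le> Z s"
    and right_dense: "\<And>s \<epsilon>. s \<in> T \<Longrightarrow> a \<le> s \<Longrightarrow> s < b \<Longrightarrow> sigma T s = s \<Longrightarrow> \<epsilon> > 0 \<Longrightarrow>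
           \<exists>\<delta>>0. \<forall>y\<in>T. s < y \<and> y < s + \<delta> \<longrightarrow> Z y \<le> Z s + \<epsilon> * (y - s)"
  shows "Z b \<le> Z a"
proof -
  have key: "Z b \<le> Z a + \<epsilon> * (b - a)" if ep: "\<epsilon> > 0" for \<epsilon>
  proof (rule time_scale_induct[OF cl aT, where P="\<lambda>s. Z s \<le> Z a + \<epsilon> * (s - a)"])
    show "Z a \<le> Z a + \<epsilon> * (a - a)" by simp
  next
    fix s assume s: "s \<in> T" "a \<le> s" "s < b" "s < sigma T s" and Ps: "Z s \<le> Z a + \<epsilon> * (s - a)"
    have "\<epsilon> * (s - a) \<le> \<epsilon> * (sigma T s - a)" using ep s by auto
    then show "Z (sigma T s) \<le> Z a + \<epsilon> * (sigma T s - a)" using right_scattered[OF s] Ps by linarith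
  next
    fix s assume s: "s \<in> T" "a \<le> s" "s < b" "sigma T s = s" and Ps: "Z s \<le> Z a + \<epsilon> * (s - a)"
    obtain \<delta> where "\<delta> > 0" and \<delta>: "\<forall>y\<in>T. s < y \<and> y < s + \<delta> \<longrightarrow> Z y \<le> Z s + \<epsilon> * (y - s)"
      using right_dense[OF s ep] by blast
    then show "\<exists>\<delta>>0. \<forall>y\<in>T. s < y \<and> y < s + \<delta> \<longrightarrow> Z y \<le> Z a + \<epsilon> * (y - a)"
      using Ps by (intro exI[of _ \<delta>]) (auto simp: algebra_simps)
  next
    fix s assume s: "s \<in> T" "a < s" "s \<le> b" "left_dense T s"
      and IH: "\<And>y. y \<in> T \<Longrightarrow> a \<le> y \<Longrightarrow> y < s \<Longrightarrow> Z y \<le> Z a + \<epsilon> * (y - a)"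
    show "Z s \<le> Z a + \<epsilon> * (s - a)"
    proof (rule field_le_epsilon)
      fix \<eta> :: real assume eta: "\<eta> > 0"
      obtain d where d: "d > 0" "\<forall>y\<in>{a..b}. dist y s < d \<longrightarrow> dist (Z y) (Z s) < \<eta>"
        using cont eta s unfolding continuous_on_iff by (metis atLeastAtMost_iff less_imp_le)
      obtain y where y: "y \<in> T" "s - min d (s - a) < y" "y < s"
        using s(4) d(1) s(2) unfolding left_dense_def by (metis diff_gt_0_iff_gt min_less_iff_conj)
      have "dist (Z y) (Z s) < \<eta>" using d y s by (auto simp: dist_real_def)
      moreover have "Z y \<le> Z a + \<epsilon> * (y - a)" using IH y by auto
      moreover have "\<epsilon> * (y - a) \<le> \<epsilon> * (s - a)" using ep y by auto
      ultimately show "Z s \<le> Z a + \<epsilon> * (s - a) + \<eta>" by (auto simp: dist_real_def)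
    qed
  qed (use bT ab in auto)
  show ?thesis
  proof (rule field_le_epsilon)
    fix e :: real assume e: "e > 0"
    have "Z b \<le> Z a + e / (b - a + 1) * (b - a)" using key[of "e / (b - a + 1)"] e ab by auto
    also have "e / (b - a + 1) * (b - a) \<le> e" using e ab by (auto simp: field_simps)
    finally show "Z b \<le> Z a + e" by simp
  qed
qed

lemma integral_step_ext_near_const:
  fixes f :: "real \<Rightarrow> 'a::banach"
  assumes cl: "closed T" and aT: "a \<in> T" and f: "rd_cont_from T a f"
    and s: "s \<in> T" "a \<le> s" "s \<le> y"
    and near: "\<And>r. r \<in> T \<Longrightarrow> s \<le> r \<Longrightarrow> r \<le> y \<Longrightarrow> norm (f r - c) \<le> \<eta>"
  shows "norm (integral {s..y} (step_ext T a f) - (y - s) *\<^sub>R c) \<le> \<eta> * (y - s)"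
proof (rule integral_near_const[OF s(3) step_ext_integrable[OF cl aT f]])
  fix r assume r: "r \<in> {s..y}"
  then have "ts_floor T r \<in> T" "s \<le> ts_floor T r" "ts_floor T r \<le> y"
    using ts_floor_props[OF cl aT, of r] ts_floor_upper[OF s(1), of r] s by auto
  then show "norm (step_ext T a f r - c) \<le> \<eta>" using near r s by (simp add: step_ext_def)
qed

text \<open>The Gronwall argument shows that \<open>(c + p \<integral>\<^sub>a\<^sup>r u \<Delta>s) / e\<^sub>p(r, a)\<close> is nonincreasing.\<close>

definition gronwall_quotient :: "real set \<Rightarrow> real \<Rightarrow> real \<Rightarrow> real \<Rightarrow> (real \<Rightarrow> real) \<Rightarrow> real \<Rightarrow> real" where
  "gronwall_quotient T a p c u r = (c + p * integral {a..r} (step_ext T a u)) / exp (ts_exp_log T a p r)"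

lemma gronwall_quotient_right_scattered:
  fixes u :: "real \<Rightarrow> real"
  assumes cl: "closed T" and aT: "a \<in> T" and p: "0 \<le> p" and u: "rd_cont_from T a u"
    and s: "s \<in> T" "a \<le> s" "s < sigma T s"
    and us: "u s \<le> c + p * integral {a..s} (step_ext T a u)"
  shows "gronwall_quotient T a p c u (sigma T s) \<le> gronwall_quotient T a p c u s"
proof -
  define \<mu> where "\<mu> = sigma T s - s"
  define V where "V r = c + p * integral {a..r} (step_ext T a u)" for r
  have \<mu>: "\<mu> > 0" "mu T s = \<mu>" using s unfolding \<mu>_def mu_def by auto
  have "integral {a..sigma T s} (step_ext T a u) = integral {a..s} (step_ext T a u) + \<mu> * u s"
    using step_ext_integral_split[OF cl aT u s(2), of "sigma T s"] integral_step_ext_right_scattered[OF cl s, of u] s(3)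
    unfolding \<mu>_def by simp
  then have "V (sigma T s) = V s + p * (\<mu> * u s)" unfolding V_def by (simp add: algebra_simps)
  also have "\<dots> \<le> V s * (1 + \<mu> * p)"
    using mult_left_mono[OF mult_left_mono[OF us], of \<mu> p] \<mu> p unfolding V_def by (simp add: algebra_simps)
  finally have V: "V (sigma T s) \<le> V s * (1 + \<mu> * p)" .
  have "ts_exp_log T a p (sigma T s) = ts_exp_log T a p s + \<mu> * xi \<mu> p"
    using step_ext_integral_split[OF cl aT rd_cont_from_xi[OF p] s(2), of "sigma T s"]
      integral_step_ext_right_scattered[OF cl s, of "\<lambda>\<tau>. xi (mu T \<tau>) p"] s \<mu>
    unfolding ts_exp_log_def \<mu>_def by simp
  then have E: "exp (ts_exp_log T a p (sigma T s)) = exp (ts_exp_log T a p s) * (1 + \<mu> * p)"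
    using exp_mult_xi[OF \<mu>(1) p] by (simp add: exp_add)
  have "0 < 1 + \<mu> * p" using \<mu> p by (simp add: add_pos_nonneg)
  then have "V (sigma T s) / (exp (ts_exp_log T a p s) * (1 + \<mu> * p)) \<le> V s / exp (ts_exp_log T a p s)"
    using divide_right_mono[OF V, of "exp (ts_exp_log T a p s) * (1 + \<mu> * p)"] by simp
  then show ?thesis unfolding gronwall_quotient_def E V_def .
qed

lemma gronwall_quotient_right_dense:
  fixes u :: "real \<Rightarrow> real"
  assumes cl: "closed T" and aT: "a \<in> T" and p: "0 \<le> p" and u: "rd_cont_from T a u"
    and s: "s \<in> T" "a \<le> s" "sigma T s = s" and ep: "\<epsilon> > 0"
    and us: "u s \<le> c + p * integral {a..s} (step_ext T a u)"
    and V_nonneg: "0 \<le> c + p * integral {a..s} (step_ext T a u)"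
  shows "\<exists>\<delta>>0. \<forall>y\<in>T. s < y \<and> y < s + \<delta> \<longrightarrow>
           gronwall_quotient T a p c u y \<le> gronwall_quotient T a p c u s + \<epsilon> * (y - s)"
proof -
  define \<xi> where "\<xi> = (\<lambda>\<tau>. xi (mu T \<tau>) p)"
  define V where "V r = c + p * integral {a..r} (step_ext T a u)" for r
  define Es where "Es = exp (ts_exp_log T a p s)"
  have \<xi>: "rd_cont_from T a \<xi>" unfolding \<xi>_def by (rule rd_cont_from_xi[OF p])
  have Es: "Es > 0" unfolding Es_def by simp
  have Vs: "0 \<le> V s" using V_nonneg unfolding V_def .
  define \<eta> where "\<eta> = min 1 (\<epsilon> * Es / (2 * (p + V s + 1)))"
  have \<eta>: "\<eta> > 0" "\<eta> \<le> 1" using ep Es Vs p unfolding \<eta>_def by auto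
  have \<eta>_small: "\<eta> * (p + V s) \<le> \<epsilon> * Es / 2"
  proof -
    have "\<eta> \<le> \<epsilon> * Es / (2 * (p + V s + 1))" unfolding \<eta>_def by simp
    then have "\<eta> * (2 * (p + V s + 1)) \<le> \<epsilon> * Es" using p Vs by (simp add: le_divide_eq)
    then show ?thesis using \<eta> by (simp add: algebra_simps)
  qed
  obtain d1 where d1: "d1 > 0" "\<forall>y\<in>T. a \<le> y \<longrightarrow> \<bar>y - s\<bar> < d1 \<longrightarrow> norm (u y - u s) \<le> \<eta>"
    using rd_cont_from_right_dense[OF u s \<eta>(1)] by blast
  define m where "m = min (1 / (p + 1)) (\<eta> / (p\<^sup>2 + 1))"
  have "m > 0" using \<eta> p unfolding m_def by (auto simp: add_nonneg_pos)
  then obtain d2 where d2: "d2 > 0" "\<forall>y\<in>T. \<bar>y - s\<bar> < d2 \<longrightarrow> mu T y \<le> m"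
    using mu_small_near_right_dense[OF s(1,3)] by blast
  define \<delta> where "\<delta> = min (min d1 d2) (1/2)"
  have "\<forall>y\<in>T. s < y \<and> y < s + \<delta> \<longrightarrow>
          gronwall_quotient T a p c u y \<le> gronwall_quotient T a p c u s + \<epsilon> * (y - s)"
  proof (intro ballI impI)
    fix y assume "y \<in> T" and y: "s < y \<and> y < s + \<delta>"
    define h where "h = y - s"
    have h: "0 \<le> h" "h \<le> 1/2" using y unfolding h_def \<delta>_def by auto
    have Iu: "\<bar>integral {s..y} (step_ext T a u) - h * u s\<bar> \<le> \<eta> * h"
    proof -
      have "norm (integral {s..y} (step_ext T a u) - (y - s) *\<^sub>R u s) \<le> \<eta> * (y - s)"
      proof (rule integral_step_ext_near_const[OF cl aT u s(1,2)])
        show "s \<le> y" using y by simp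
        fix r assume "r \<in> T" "s \<le> r" "r \<le> y"
        then show "norm (u r - u s) \<le> \<eta>" using d1 s y unfolding \<delta>_def by auto
      qed
      then show ?thesis unfolding h_def by simp
    qed
    have I\<xi>: "\<bar>integral {s..y} (step_ext T a \<xi>) - h * p\<bar> \<le> \<eta> * h"
    proof -
      have "norm (integral {s..y} (step_ext T a \<xi>) - (y - s) *\<^sub>R p) \<le> \<eta> * (y - s)"
      proof (rule integral_step_ext_near_const[OF cl aT \<xi> s(1,2)])
        show "s \<le> y" using y by simp
        fix r assume "r \<in> T" "s \<le> r" "r \<le> y"
        then have "mu T r \<le> m" using d2 y unfolding \<delta>_def by auto
        then show "norm (\<xi> r - p) \<le> \<eta>"
          using abs_xi_diff_le_eps[OF mu_nonneg p \<eta>(1)] unfolding \<xi>_def m_def by auto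
      qed
      then show ?thesis unfolding h_def by simp
    qed
    have "V y = V s + p * integral {s..y} (step_ext T a u)"
      using step_ext_integral_split[OF cl aT u s(2), of y] y unfolding V_def by (simp add: algebra_simps)
    moreover have "integral {s..y} (step_ext T a u) \<le> h * (u s + \<eta>)" using Iu by (simp add: algebra_simps)
    ultimately have Vy: "V y \<le> V s + p * (h * (u s + \<eta>))" using p by (simp add: mult_left_mono)
    have "ts_exp_log T a p y = ts_exp_log T a p s + integral {s..y} (step_ext T a \<xi>)"
      using step_ext_integral_split[OF cl aT \<xi> s(2), of y] y unfolding ts_exp_log_def \<xi>_def by simp
    moreover have "1 + h * (p - \<eta>) \<le> exp (integral {s..y} (step_ext T a \<xi>))"
    proof -
      have "h * (p - \<eta>) \<le> integral {s..y} (step_ext T a \<xi>)" using I\<xi> by (simp add: algebra_simps)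
      then show ?thesis using exp_ge_add_one_self[of "h * (p - \<eta>)"] by (meson exp_le_cancel_iff order_trans)
    qed
    ultimately have Ey: "Es * (1 + h * (p - \<eta>)) \<le> exp (ts_exp_log T a p y)"
      using Es unfolding Es_def by (simp add: exp_add)
    have "V y / exp (ts_exp_log T a p y) \<le> V s / Es + \<epsilon> * h"
      using gronwall_step_estimate[OF Vs Es p \<eta> \<eta>_small h ep _ Vy Ey] us y s
      unfolding V_def by simp
    then show "gronwall_quotient T a p c u y \<le> gronwall_quotient T a p c u s + \<epsilon> * (y - s)"
      unfolding gronwall_quotient_def V_def Es_def h_def .
  qed
  moreover have "\<delta> > 0" using d1 d2 unfolding \<delta>_def by simp
  ultimately show ?thesis by blast
qed

lemma ts_gronwall:
  fixes u :: "real \<Rightarrow> real"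
  assumes cl: "closed T" and aT: "a \<in> T" and p: "0 \<le> p" and c: "0 \<le> c"
    and u: "rd_cont_from T a u" and u_nonneg: "\<And>s. s \<in> T \<Longrightarrow> a \<le> s \<Longrightarrow> 0 \<le> u s"
    and ineq: "\<And>s. s \<in> T \<Longrightarrow> a \<le> s \<Longrightarrow> u s \<le> c + p * delta_integral T u a s"
    and b: "b \<in> T" "a \<le> b"
  shows "u b \<le> c * ts_exp T (\<lambda>_. p) b a"
proof -
  have ineq': "u s \<le> c + p * integral {a..s} (step_ext T a u)" if "s \<in> T" "a \<le> s" for s
    using ineq[OF that] delta_integral_eq_integral[OF cl aT u that] by simp
  have "gronwall_quotient T a p c u b \<le> gronwall_quotient T a p c u a"
  proof (rule time_scale_le_of_local_estimates[OF cl aT b])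
    show "continuous_on {a..b} (gronwall_quotient T a p c u)"
      unfolding gronwall_quotient_def
      by (intro continuous_intros indefinite_integral_continuous_1 step_ext_integrable[OF cl aT u]
            continuous_on_ts_exp_log cl aT p) simp
  next
    fix s assume "s \<in> T" "a \<le> s" "s < b" "s < sigma T s"
    then show "gronwall_quotient T a p c u (sigma T s) \<le> gronwall_quotient T a p c u s"
      by (intro gronwall_quotient_right_scattered[OF cl aT p u] ineq') auto
  next
    fix s \<epsilon> :: real assume "s \<in> T" "a \<le> s" "s < b" "sigma T s = s" "\<epsilon> > 0"
    then show "\<exists>\<delta>>0. \<forall>y\<in>T. s < y \<and> y < s + \<delta> \<longrightarrow>
                 gronwall_quotient T a p c u y \<le> gronwall_quotient T a p c u s + \<epsilon> * (y - s)"
      using ineq' u_nonneg by (intro gronwall_quotient_right_dense[OF cl aT p u]) (auto intro: order_trans)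
  qed
  then have "u b \<le> c * exp (ts_exp_log T a p b)"
    using ineq'[OF b] by (simp add: gronwall_quotient_def ts_exp_log_def divide_le_eq mult.commute)
  then show ?thesis using ts_exp_const_base[OF cl aT p b] by simp
qed

section \<open>The integral equation\<close>

lemma rd_cont_from_compose_exp_lipschitz:
  fixes x :: "real \<Rightarrow> 'a::real_normed_vector" and k :: "real \<Rightarrow> 'a \<Rightarrow> 'b::real_normed_vector"
  assumes cl: "closed T" and aT: "a \<in> T" and \<alpha>: "0 \<le> \<alpha>" and K: "0 \<le> K" and t: "t \<in> T" "a \<le> t"
    and x: "rd_cont_from T a x" and k: "\<And>v. rd_cont_from T a (\<lambda>s. k s v)"
    and lip: "\<And>s v v'. s \<in> T \<Longrightarrow> a \<le> s \<Longrightarrow>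
                norm (k s v - k s v') \<le> K * ts_exp T (\<lambda>_. \<alpha>) s t * norm (v - v')"
  shows "rd_cont_from T a (\<lambda>s. k s (x s))"
proof (rule rd_cont_from_compose_lipschitz[OF x k])
  fix r
  let ?L = "K * exp (ts_exp_log T a \<alpha> (max a (r + 1)) - ts_exp_log T a \<alpha> t)"
  show "\<exists>L\<ge>0. \<forall>s\<in>T. a \<le> s \<longrightarrow> s < r + 1 \<longrightarrow> (\<forall>v v'. norm (k s v - k s v') \<le> L * norm (v - v'))"
  proof (intro exI[of _ ?L] conjI ballI impI allI)
    fix s v v' assume s: "s \<in> T" "a \<le> s" "s < r + 1"
    have "norm (k s v - k s v') \<le> K * exp (ts_exp_log T a \<alpha> s - ts_exp_log T a \<alpha> t) * norm (v - v')"
      using lip[OF s(1,2)] ts_exp_const_eq_exp[OF cl aT \<alpha> s(1,2) t] by simp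
    also have "\<dots> \<le> ?L * norm (v - v')"
      using ts_exp_log_mono[OF cl aT \<alpha> s(2), of "max a (r + 1)"] s K
      by (intro mult_right_mono mult_left_mono) auto
    finally show "norm (k s v - k s v') \<le> ?L * norm (v - v')" .
  qed (use K in simp)
qed

lemma norm_delta_integral_kernel_diff_le:
  fixes x :: "real \<Rightarrow> 'a::banach" and k :: "real \<Rightarrow> 'a \<Rightarrow> 'b::banach"
  assumes cl: "closed T" and aT: "a \<in> T" and \<alpha>: "0 \<le> \<alpha>" and K: "0 \<le> K" and t: "t \<in> T" "a \<le> t"
    and x: "rd_cont_from T a x" and k: "\<And>v. rd_cont_from T a (\<lambda>s. k s v)"
    and lip: "\<And>s v v'. s \<in> T \<Longrightarrow> a \<le> s \<Longrightarrow>
                norm (k s v - k s v') \<le> K * ts_exp T (\<lambda>_. \<alpha>) s t * norm (v - v')"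
    and r: "r \<in> T" "a \<le> r"
  shows "norm (delta_integral T (\<lambda>s. k s (x s)) a r - delta_integral T (\<lambda>s. k s 0) a r)
           \<le> K / ts_exp T (\<lambda>_. \<alpha>) t a * delta_integral T (\<lambda>s. ts_exp T (\<lambda>_. \<alpha>) s a * norm (x s)) a r"
proof -
  let ?E = "\<lambda>s. ts_exp T (\<lambda>_. \<alpha>) s a"
  have kx: "rd_cont_from T a (\<lambda>s. k s (x s))"
    by (rule rd_cont_from_compose_exp_lipschitz[OF cl aT \<alpha> K t x k lip])
  have w: "rd_cont_from T a (\<lambda>s. ?E s * norm (x s))"
    by (intro rd_cont_from_mult rd_cont_from_norm rd_cont_from_ts_exp_const cl aT \<alpha> x)
  have "norm (delta_integral T (\<lambda>s. k s (x s)) a r - delta_integral T (\<lambda>s. k s 0) a r)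
        = norm (delta_integral T (\<lambda>s. k s (x s) - k s 0) a r)"
    using delta_integral_diff[OF cl aT kx k r] by simp
  also have "\<dots> \<le> delta_integral T (\<lambda>s. K / ?E t * (?E s * norm (x s))) a r"
  proof (rule norm_delta_integral_le[OF cl aT rd_cont_from_diff[OF kx k] _ r])
    show "rd_cont_from T a (\<lambda>s. K / ?E t * (?E s * norm (x s)))"
      by (intro rd_cont_from_mult rd_cont_from_const w)
    fix s assume s: "s \<in> T" "a \<le> s" "s \<le> r"
    show "norm (k s (x s) - k s 0) \<le> K / ?E t * (?E s * norm (x s))"
      using lip[OF s(1,2), of "x s" 0] ts_exp_const_quotient[OF cl aT \<alpha> s(1,2) t] by simp
  qed
  also have "\<dots> = K / ?E t * delta_integral T (\<lambda>s. ?E s * norm (x s)) a r"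
    by (rule delta_integral_mult_left[OF cl aT w r])
  finally show ?thesis .
qed

lemma absorb_contraction_ineq:
  fixes N E y B J C K d :: real
  assumes N: "0 \<le> N" "N < 1" and E: "E > 0"
    and ineq: "y \<le> N * (y + B / E * J + C / E * K) + d / E"
  shows "E * y \<le> (d / (1 - N) + N / (1 - N) * C * K) + B * (N / (1 - N)) * J"
proof -
  have "E * y \<le> E * (N * (y + B / E * J + C / E * K) + d / E)" using ineq E by (intro mult_left_mono) auto
  also have "\<dots> = N * (E * y) + N * B * J + N * C * K + d" using E by (simp add: field_simps)
  finally have "(1 - N) * (E * y) \<le> N * B * J + N * C * K + d" by (simp add: algebra_simps)
  then have "E * y \<le> (N * B * J + N * C * K + d) / (1 - N)" using N by (simp add: le_divide_eq mult.commute)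
  then show ?thesis by (simp add: add_divide_distrib algebra_simps)
qed

locale volterra_fredholm_solution =
  fixes T :: "real set" and a b \<alpha> B C N d :: real
    and f :: "real \<Rightarrow> 'X::banach \<Rightarrow> 'X \<Rightarrow> 'X \<Rightarrow> 'X"
    and h g :: "real \<Rightarrow> real \<Rightarrow> 'X \<Rightarrow> 'X"
    and x :: "real \<Rightarrow> 'X"
  assumes closed: "closed T" and a_in: "a \<in> T" and b_in: "b \<in> T" and a_le_b: "a \<le> b"
    and nonneg: "0 \<le> \<alpha>" "0 \<le> B" "0 \<le> C" "0 \<le> d"
    and N: "0 \<le> N" "N < 1"
    and h_rd: "\<And>t v. t \<in> T \<Longrightarrow> a \<le> t \<Longrightarrow> rd_cont_from T a (\<lambda>s. h t s v)"
    and g_rd: "\<And>t v. t \<in> T \<Longrightarrow> a \<le> t \<Longrightarrow> rd_cont_from T a (\<lambda>s. g t s v)"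
    and x_rd: "rd_cont_from T a x"
    and f_lip: "\<And>t u v w u' v' w'. t \<in> T \<Longrightarrow> a \<le> t \<Longrightarrow>
         norm (f t u v w - f t u' v' w') \<le> N * (norm (u - u') + norm (v - v') + norm (w - w'))"
    and h_lip: "\<And>t s v v'. t \<in> T \<Longrightarrow> a \<le> t \<Longrightarrow> s \<in> T \<Longrightarrow> a \<le> s \<Longrightarrow>
         norm (h t s v - h t s v') \<le> B * ts_exp T (\<lambda>_. \<alpha>) s t * norm (v - v')"
    and g_lip: "\<And>t s u u'. t \<in> T \<Longrightarrow> a \<le> t \<Longrightarrow> s \<in> T \<Longrightarrow> a \<le> s \<Longrightarrow>
         norm (g t s u - g t s u') \<le> C * ts_exp T (\<lambda>_. \<alpha>) s t * norm (u - u')"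
    and f0: "\<And>t. t \<in> T \<Longrightarrow> a \<le> t \<Longrightarrow>
         norm (f t 0 (delta_integral T (\<lambda>s. h t s 0) a t) (delta_integral T (\<lambda>s. g t s 0) a b))
           \<le> d / ts_exp T (\<lambda>_. \<alpha>) t a"
    and x_sol: "\<And>t. t \<in> T \<Longrightarrow> a \<le> t \<Longrightarrow>
         x t = f t (x t) (delta_integral T (\<lambda>s. h t s (x s)) a t) (delta_integral T (\<lambda>s. g t s (x s)) a b)"
begin

definition weighted_norm :: "real \<Rightarrow> real" where
  "weighted_norm s = ts_exp T (\<lambda>_. \<alpha>) s a * norm (x s)"

definition gronwall_const :: real where
  "gronwall_const = d / (1 - N) + N / (1 - N) * C * delta_integral T weighted_norm a b"

definition fredholm_ratio :: real where
  "fredholm_ratio = delta_integral T (\<lambda>s. C * (N / (1 - N)) * ts_exp T (\<lambda>_. B * (N / (1 - N))) s a) a b"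

lemma rd_weighted_norm: "rd_cont_from T a weighted_norm"
  unfolding weighted_norm_def
  by (intro rd_cont_from_mult rd_cont_from_norm rd_cont_from_ts_exp_const closed a_in nonneg x_rd)

lemma weighted_norm_nonneg: "0 \<le> weighted_norm s"
  by (simp add: weighted_norm_def ts_exp_pos less_imp_le)

lemma gronwall_const_nonneg: "0 \<le> gronwall_const"
  unfolding gronwall_const_def using nonneg N weighted_norm_nonneg
  by (intro add_nonneg_nonneg mult_nonneg_nonneg delta_integral_nonneg[OF closed a_in rd_weighted_norm b_in a_le_b])
     auto

lemma weighted_norm_integral_inequality:
  assumes s: "s \<in> T" "a \<le> s"
  shows "weighted_norm s \<le> gronwall_const + B * (N / (1 - N)) * delta_integral T weighted_norm a s"
proof -
  let ?E = "\<lambda>r. ts_exp T (\<lambda>_. \<alpha>) r a"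
  define Ih where "Ih = delta_integral T (\<lambda>r. h s r (x r)) a s"
  define Ih0 where "Ih0 = delta_integral T (\<lambda>r. h s r 0) a s"
  define Ig where "Ig = delta_integral T (\<lambda>r. g s r (x r)) a b"
  define Ig0 where "Ig0 = delta_integral T (\<lambda>r. g s r 0) a b"
  have bh: "norm (Ih - Ih0) \<le> B / ?E s * delta_integral T weighted_norm a s"
    unfolding Ih_def Ih0_def weighted_norm_def
    by (rule norm_delta_integral_kernel_diff_le[OF closed a_in nonneg(1,2) s x_rd h_rd[OF s] h_lip[OF s] s])
  have bg: "norm (Ig - Ig0) \<le> C / ?E s * delta_integral T weighted_norm a b"
    unfolding Ig_def Ig0_def weighted_norm_def
    by (rule norm_delta_integral_kernel_diff_le[OF closed a_in nonneg(1,3) s x_rd g_rd[OF s] g_lip[OF s] b_in a_le_b])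
  have "norm (x s) \<le> norm (f s (x s) Ih Ig - f s 0 Ih0 Ig0) + norm (f s 0 Ih0 Ig0)"
    using x_sol[OF s] norm_triangle_sub[of "f s (x s) Ih Ig" "f s 0 Ih0 Ig0"] unfolding Ih_def Ig_def by simp
  also have "\<dots> \<le> N * (norm (x s) + norm (Ih - Ih0) + norm (Ig - Ig0)) + d / ?E s"
    using f_lip[OF s, of "x s" Ih Ig 0 Ih0 Ig0] f0[OF s] unfolding Ih0_def Ig0_def by simp
  also have "\<dots> \<le> N * (norm (x s) + B / ?E s * delta_integral T weighted_norm a s
                         + C / ?E s * delta_integral T weighted_norm a b) + d / ?E s"
    using bh bg N by (intro add_right_mono mult_left_mono add_mono) auto
  finally show ?thesis
    unfolding weighted_norm_def gronwall_const_def by (rule absorb_contraction_ineq[OF N ts_exp_pos])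
qed

lemma weighted_norm_le:
  assumes "s \<in> T" "a \<le> s"
  shows "weighted_norm s \<le> gronwall_const * ts_exp T (\<lambda>_. B * (N / (1 - N))) s a"
  using nonneg N
  by (intro ts_gronwall[OF closed a_in _ gronwall_const_nonneg rd_weighted_norm weighted_norm_nonneg
        weighted_norm_integral_inequality assms]) auto

lemma gronwall_const_le:
  assumes q: "fredholm_ratio < 1"
  shows "gronwall_const \<le> d / ((1 - N) * (1 - fredholm_ratio))"
proof -
  let ?p = "B * (N / (1 - N))" and ?Ns = "N / (1 - N)"
  have p: "0 \<le> ?p" using nonneg N by simp
  have ep: "rd_cont_from T a (\<lambda>s. ts_exp T (\<lambda>_. ?p) s a)" by (rule rd_cont_from_ts_exp_const[OF closed a_in p])
  have "delta_integral T weighted_norm a b \<le> delta_integral T (\<lambda>s. gronwall_const * ts_exp T (\<lambda>_. ?p) s a) a b"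
    by (rule delta_integral_mono[OF closed a_in rd_weighted_norm rd_cont_from_mult[OF rd_cont_from_const ep]
          b_in a_le_b weighted_norm_le])
  also have "\<dots> = gronwall_const * delta_integral T (\<lambda>s. ts_exp T (\<lambda>_. ?p) s a) a b"
    by (rule delta_integral_mult_left[OF closed a_in ep b_in a_le_b])
  finally have "C * ?Ns * delta_integral T weighted_norm a b \<le>
                C * ?Ns * (gronwall_const * delta_integral T (\<lambda>s. ts_exp T (\<lambda>_. ?p) s a) a b)"
    using nonneg N by (intro mult_left_mono) auto
  also have "\<dots> = gronwall_const * fredholm_ratio"
    unfolding fredholm_ratio_def delta_integral_mult_left[OF closed a_in ep b_in a_le_b] by simp
  moreover have "gronwall_const = d / (1 - N) + C * ?Ns * delta_integral T weighted_norm a b"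
    unfolding gronwall_const_def by simp
  ultimately have "gronwall_const * (1 - fredholm_ratio) \<le> d / (1 - N)"
    unfolding right_diff_distrib mult_1_right by linarith
  then show ?thesis using q N by (simp add: le_divide_eq divide_le_eq mult.commute mult.left_commute)
qed

lemma norm_solution_le:
  assumes q: "fredholm_ratio < 1" and t: "t \<in> T" "a \<le> t"
  shows "norm (x t) \<le> d / ((1 - N) * (1 - fredholm_ratio))
                        * ts_exp T (ts_ominus T (\<lambda>_. B * (N / (1 - N))) (\<lambda>_. \<alpha>)) t a"
proof -
  let ?Ep = "ts_exp T (\<lambda>_. B * (N / (1 - N))) t a" and ?E\<alpha> = "ts_exp T (\<lambda>_. \<alpha>) t a"
  have "norm (x t) = weighted_norm t / ?E\<alpha>"
    unfolding weighted_norm_def using ts_exp_pos[of T _ t a] by (simp add: less_imp_neq[symmetric])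
  also have "\<dots> \<le> gronwall_const * ?Ep / ?E\<alpha>"
    by (intro divide_right_mono weighted_norm_le t) (simp add: ts_exp_pos less_imp_le)
  also have "\<dots> \<le> d / ((1 - N) * (1 - fredholm_ratio)) * ?Ep / ?E\<alpha>"
    by (intro divide_right_mono mult_right_mono gronwall_const_le q) (simp_all add: ts_exp_pos less_imp_le)
  also have "\<dots> = d / ((1 - N) * (1 - fredholm_ratio)) * ts_exp T (ts_ominus T (\<lambda>_. B * (N / (1 - N))) (\<lambda>_. \<alpha>)) t a"
    using nonneg N by (simp add: ts_exp_ominus_const[OF closed a_in _ nonneg(1) t])
  finally show ?thesis .
qed

end

theorem theorem5p1:
  fixes T :: "real set" and a b \<alpha> B C N d :: real
    and f :: "real \<Rightarrow> 'X::banach \<Rightarrow> 'X \<Rightarrow> 'X \<Rightarrow> 'X"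
    and h g :: "real \<Rightarrow> real \<Rightarrow> 'X \<Rightarrow> 'X"
    and x :: "real \<Rightarrow> 'X"
  defines "I \<equiv> {a..} \<inter> T"
  defines "Nstar \<equiv> N / (1 - N)"
  defines "q \<equiv> delta_integral T (\<lambda>s. C * Nstar * ts_exp T (\<lambda>_. B * Nstar) s a) a b"
  assumes TS: "time_scale T"
    and ab: "a \<in> T" "b \<in> T" "a < b"
    and f_rd: "\<And>u v w. rd_continuous_on T I (\<lambda>t. f t u v w)"
    and h_rd: "\<And>t v. t \<in> I \<Longrightarrow> rd_continuous_on T I (\<lambda>s. h t s v)"
    and g_rd: "\<And>t v. t \<in> I \<Longrightarrow> rd_continuous_on T I (\<lambda>s. g t s v)"
    and pos: "\<alpha> > 0" "B > 0" "C > 0"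
    and N: "0 \<le> N" "N < 1"
    and f_lip: "\<And>t u v w u' v' w'. t \<in> I \<Longrightarrow>
         norm (f t u v w - f t u' v' w') \<le> N * (norm (u - u') + norm (v - v') + norm (w - w'))"
    and h_lip: "\<And>t s v v'. t \<in> I \<Longrightarrow> s \<in> I \<Longrightarrow>
         norm (h t s v - h t s v') \<le> B * ts_exp T (\<lambda>_. \<alpha>) s t * norm (v - v')"
    and g_lip: "\<And>t s u u'. t \<in> I \<Longrightarrow> s \<in> I \<Longrightarrow>
         norm (g t s u - g t s u') \<le> C * ts_exp T (\<lambda>_. \<alpha>) s t * norm (u - u')"
    and q_lt: "q < 1"
    and d: "d \<ge> 0"
    and f0: "\<And>t. t \<in> I \<Longrightarrow>
         norm (f t 0 (delta_integral T (\<lambda>s. h t s 0) a t) (delta_integral T (\<lambda>s. g t s 0) a b))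
           \<le> d / ts_exp T (\<lambda>_. \<alpha>) t a"
    and x_rd: "rd_continuous_on T I x"
    and x_sol: "\<And>t. t \<in> I \<Longrightarrow>
         x t = f t (x t) (delta_integral T (\<lambda>s. h t s (x s)) a t) (delta_integral T (\<lambda>s. g t s (x s)) a b)"
  shows "\<And>t. t \<in> I \<Longrightarrow>
     norm (x t) \<le> d / ((1 - N) * (1 - q)) * ts_exp T (ts_ominus T (\<lambda>_. B * Nstar) (\<lambda>_. \<alpha>)) t a"
proof -
  fix t assume "t \<in> I"
  have I: "s \<in> I \<longleftrightarrow> s \<in> T \<and> a \<le> s" for s unfolding I_def by auto
  interpret volterra_fredholm_solution T a b \<alpha> B C N d f h g x
  proof
    show "closed T" using TS by (simp add: time_scale_def)
    show "rd_cont_from T a x"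
      by (rule rd_continuous_on_imp_rd_cont_from) (use x_rd in \<open>simp add: I_def\<close>)
    fix t v assume "t \<in> T" "a \<le> t"
    then show "rd_cont_from T a (\<lambda>s. h t s v)" "rd_cont_from T a (\<lambda>s. g t s v)"
      using h_rd[of t v] g_rd[of t v] by (auto intro!: rd_continuous_on_imp_rd_cont_from simp: I_def)
  qed (use ab pos N d f_lip h_lip g_lip f0 x_sol in \<open>simp_all add: I\<close>)
  have "q = fredholm_ratio" unfolding q_def Nstar_def fredholm_ratio_def ..
  then show "norm (x t) \<le> d / ((1 - N) * (1 - q)) * ts_exp T (ts_ominus T (\<lambda>_. B * Nstar) (\<lambda>_. \<alpha>)) t a"
    using norm_solution_le q_lt \<open>t \<in> I\<close> unfolding I Nstar_def by blast
qed

end
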